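(* Let $A$ be a Hopf algebra over a field $k$ admitting a Haar measure, and let $Z$ be an $A$-Galois extension. Then there exists a unique Haar measure on $Z$.
   Context: An $A$-Galois extension is a nonzero left $A$-comodule algebra $Z$ (coaction $\alpha_Z:Z\to A\otimes Z$ an algebra morphism) such that $(1_A\otimes m_Z)\circ(\alpha_Z\otimes 1_Z):Z\otimes Z\to A\otimes Z$ is bijective. A Haar measure on $Z$ is a linear map $\mu:Z\to k$ with $(1_A\otimes\mu)\circ\alpha_Z=u_A\circ\mu$ (where $u_A:k\to A$ is the unit) and $\mu(1_Z)=1$. A Haar measure on $A$ is a Haar measure on $A$ viewed as an $A$-Galois extension via $\Delta$, i.e. a linear $J:A\to k$ with $(1_A\otimes J)\Delta=u_A\circ J$ and $J(1)=1$. *)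

theory Defs
  imports Main "HOL.Vector_Spaces"
begin

text \<open>
A k-vector space
is a type 'v of class ab_group_add together with a scalar multiplication
s :: 'k => 'v => 'v satisfying the library locale vector_space s.  A (unital,
associative) k-algebra is a type of class ring_1 (so in particular 1 \<noteq> 0,
i.e. the algebra is nonzero) whose scalar multiplication is compatible with
the ring multiplication.

Tensor products are realised concretely: the free k-vector space on a set X
consists of the finitely supported functions X => k; the tensor product
V (x) W is the quotient of the free vector space on V x W by the k-span of the
bilinearity relations, and V (x) W (x) U is the quotient of the free vector
space on V x W x U by the span of the trilinearity relations.  Elements of
tensor products are handled through representatives, equality in the tensor
product being the equivalence teq2 / teq3 below.
\<close>

definition supp :: "('x \<Rightarrow> 'k::zero) \<Rightarrow> 'x set" where
  "supp f = {x. f x \<noteq> 0}"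

definition fsupp :: "('x \<Rightarrow> 'k::zero) \<Rightarrow> bool" where
  "fsupp f \<longleftrightarrow> finite (supp f)"

definition delta :: "'x \<Rightarrow> 'x \<Rightarrow> 'k::{zero,one}" where
  "delta x = (\<lambda>y. if y = x then 1 else 0)"

definition fext :: "('x \<Rightarrow> 'y \<Rightarrow> 'k::comm_semiring_1) \<Rightarrow> ('x \<Rightarrow> 'k) \<Rightarrow> 'y \<Rightarrow> 'k" where
  "fext h f = (\<lambda>y. \<Sum>x\<in>supp f. f x * h x y)"

definition fsumv :: "('k::zero \<Rightarrow> 'v \<Rightarrow> 'v) \<Rightarrow> ('x \<Rightarrow> 'v::comm_monoid_add) \<Rightarrow> ('x \<Rightarrow> 'k) \<Rightarrow> 'v" where
  "fsumv s g f = (\<Sum>x\<in>supp f. s (f x) (g x))"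

inductive_set fspan :: "('x \<Rightarrow> 'k::field) set \<Rightarrow> ('x \<Rightarrow> 'k) set" for G where
  zero: "(\<lambda>_. 0) \<in> fspan G"
| step: "g \<in> G \<Longrightarrow> f \<in> fspan G \<Longrightarrow> (\<lambda>x. c * g x + f x) \<in> fspan G"

definition rel2 :: "('k::field \<Rightarrow> 'v::ab_group_add \<Rightarrow> 'v) \<Rightarrow> ('k \<Rightarrow> 'w::ab_group_add \<Rightarrow> 'w)
    \<Rightarrow> ('v \<times> 'w \<Rightarrow> 'k) set" where
  "rel2 sV sW =
     {(\<lambda>p. delta (v + v', w) p - delta (v, w) p - delta (v', w) p) | v v' w. True}
   \<union> {(\<lambda>p. delta (v, w + w') p - delta (v, w) p - delta (v, w') p) | v w w'. True}
   \<union> {(\<lambda>p. delta (sV c v, w) p - c * delta (v, w) p) | c v w. True}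
   \<union> {(\<lambda>p. delta (v, sW c w) p - c * delta (v, w) p) | c v w. True}"

definition teq2 :: "('k::field \<Rightarrow> 'v::ab_group_add \<Rightarrow> 'v) \<Rightarrow> ('k \<Rightarrow> 'w::ab_group_add \<Rightarrow> 'w)
    \<Rightarrow> ('v \<times> 'w \<Rightarrow> 'k) \<Rightarrow> ('v \<times> 'w \<Rightarrow> 'k) \<Rightarrow> bool" where
  "teq2 sV sW f g \<longleftrightarrow> (\<lambda>p. f p - g p) \<in> fspan (rel2 sV sW)"

definition rel3 :: "('k::field \<Rightarrow> 'u::ab_group_add \<Rightarrow> 'u) \<Rightarrow> ('k \<Rightarrow> 'v::ab_group_add \<Rightarrow> 'v)
    \<Rightarrow> ('k \<Rightarrow> 'w::ab_group_add \<Rightarrow> 'w) \<Rightarrow> ('u \<times> 'v \<times> 'w \<Rightarrow> 'k) set" where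
  "rel3 sU sV sW =
     {(\<lambda>p. delta (u + u', v, w) p - delta (u, v, w) p - delta (u', v, w) p) | u u' v w. True}
   \<union> {(\<lambda>p. delta (u, v + v', w) p - delta (u, v, w) p - delta (u, v', w) p) | u v v' w. True}
   \<union> {(\<lambda>p. delta (u, v, w + w') p - delta (u, v, w) p - delta (u, v, w') p) | u v w w'. True}
   \<union> {(\<lambda>p. delta (sU c u, v, w) p - c * delta (u, v, w) p) | c u v w. True}
   \<union> {(\<lambda>p. delta (u, sV c v, w) p - c * delta (u, v, w) p) | c u v w. True}
   \<union> {(\<lambda>p. delta (u, v, sW c w) p - c * delta (u, v, w) p) | c u v w. True}"

definition teq3 :: "('k::field \<Rightarrow> 'u::ab_group_add \<Rightarrow> 'u) \<Rightarrow> ('k \<Rightarrow> 'v::ab_group_add \<Rightarrow> 'v)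
    \<Rightarrow> ('k \<Rightarrow> 'w::ab_group_add \<Rightarrow> 'w) \<Rightarrow> ('u \<times> 'v \<times> 'w \<Rightarrow> 'k) \<Rightarrow> ('u \<times> 'v \<times> 'w \<Rightarrow> 'k) \<Rightarrow> bool" where
  "teq3 sU sV sW f g \<longleftrightarrow> (\<lambda>p. f p - g p) \<in> fspan (rel3 sU sV sW)"

definition tmul :: "('a::times \<times> 'b::times \<Rightarrow> 'k::comm_semiring_1) \<Rightarrow> ('a \<times> 'b \<Rightarrow> 'k) \<Rightarrow> ('a \<times> 'b \<Rightarrow> 'k)" where
  "tmul f g = fext (\<lambda>p. fext (\<lambda>q. delta (fst p * fst q, snd p * snd q)) g) f"

text \<open>(h (x) id) : A (x) Z -> A (x) A (x) Z  and  (id (x) h) : A (x) Z -> A (x) B (x) W\<close>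
definition map_left :: "('a \<Rightarrow> ('b \<times> 'c \<Rightarrow> 'k::comm_semiring_1)) \<Rightarrow> ('a \<times> 'z \<Rightarrow> 'k) \<Rightarrow> ('b \<times> 'c \<times> 'z \<Rightarrow> 'k)" where
  "map_left h f = fext (\<lambda>(a, z). fext (\<lambda>(x, y). delta (x, y, z)) (h a)) f"

definition map_right :: "('z \<Rightarrow> ('b \<times> 'w \<Rightarrow> 'k::comm_semiring_1)) \<Rightarrow> ('a \<times> 'z \<Rightarrow> 'k) \<Rightarrow> ('a \<times> 'b \<times> 'w \<Rightarrow> 'k)" where
  "map_right h f = fext (\<lambda>(a, z). fext (\<lambda>(b, w). delta (a, b, w)) (h z)) f"

definition k_algebra :: "('k::field \<Rightarrow> 'a::ring_1 \<Rightarrow> 'a) \<Rightarrow> bool" where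
  "k_algebra s \<longleftrightarrow> vector_space s \<and>
     (\<forall>c x y. s c (x * y) = s c x * y \<and> s c (x * y) = x * s c y)"

definition tlinear :: "('k::field \<Rightarrow> 'x::ab_group_add \<Rightarrow> 'x) \<Rightarrow> ('k \<Rightarrow> 'v::ab_group_add \<Rightarrow> 'v)
    \<Rightarrow> ('k \<Rightarrow> 'w::ab_group_add \<Rightarrow> 'w) \<Rightarrow> ('x \<Rightarrow> ('v \<times> 'w \<Rightarrow> 'k)) \<Rightarrow> bool" where
  "tlinear sX sV sW h \<longleftrightarrow> (\<forall>x. fsupp (h x)) \<and>
     (\<forall>x y. teq2 sV sW (h (x + y)) (\<lambda>p. h x p + h y p)) \<and>
     (\<forall>c x. teq2 sV sW (h (sX c x)) (\<lambda>p. c * h x p))"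

definition hopf_algebra :: "('k::field \<Rightarrow> 'a::ring_1 \<Rightarrow> 'a) \<Rightarrow> ('a \<Rightarrow> ('a \<times> 'a \<Rightarrow> 'k))
    \<Rightarrow> ('a \<Rightarrow> 'k) \<Rightarrow> bool" where
  "hopf_algebra sA Delta eps \<longleftrightarrow>
     k_algebra sA \<and>
     \<comment> \<open>comultiplication: linear, coassociative\<close>
     tlinear sA sA sA Delta \<and>
     (\<forall>a. teq3 sA sA sA (map_left Delta (Delta a)) (map_right Delta (Delta a))) \<and>
     \<comment> \<open>counit: linear, counital\<close>
     Vector_Spaces.linear sA (*) eps \<and>
     (\<forall>a. fsumv sA (\<lambda>(x, y). sA (eps x) y) (Delta a) = a) \<and>
     (\<forall>a. fsumv sA (\<lambda>(x, y). sA (eps y) x) (Delta a) = a) \<and>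
     \<comment> \<open>bialgebra: Delta and eps are algebra morphisms\<close>
     (\<forall>x y. teq2 sA sA (Delta (x * y)) (tmul (Delta x) (Delta y))) \<and>
     teq2 sA sA (Delta 1) (delta (1, 1)) \<and>
     (\<forall>x y. eps (x * y) = eps x * eps y) \<and> eps 1 = 1 \<and>
     \<comment> \<open>antipode: m (S (x) id) Delta = u eps = m (id (x) S) Delta\<close>
     (\<exists>S. Vector_Spaces.linear sA sA S \<and>
        (\<forall>a. fsumv sA (\<lambda>(x, y). S x * y) (Delta a) = sA (eps a) 1) \<and>
        (\<forall>a. fsumv sA (\<lambda>(x, y). x * S y) (Delta a) = sA (eps a) 1))"

definition comodule_algebra :: "('k::field \<Rightarrow> 'a::ring_1 \<Rightarrow> 'a) \<Rightarrow> ('a \<Rightarrow> ('a \<times> 'a \<Rightarrow> 'k))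
    \<Rightarrow> ('a \<Rightarrow> 'k) \<Rightarrow> ('k \<Rightarrow> 'z::ring_1 \<Rightarrow> 'z) \<Rightarrow> ('z \<Rightarrow> ('a \<times> 'z \<Rightarrow> 'k)) \<Rightarrow> bool" where
  "comodule_algebra sA Delta eps sZ alpha \<longleftrightarrow>
     k_algebra sZ \<and>
     tlinear sZ sA sZ alpha \<and>
     \<comment> \<open>(Delta (x) id) alpha = (id (x) alpha) alpha\<close>
     (\<forall>z. teq3 sA sA sZ (map_left Delta (alpha z)) (map_right alpha (alpha z))) \<and>
     \<comment> \<open>(eps (x) id) alpha = id\<close>
     (\<forall>z. fsumv sZ (\<lambda>(a, w). sZ (eps a) w) (alpha z) = z) \<and>
     \<comment> \<open>alpha is an algebra morphism\<close>
     (\<forall>z w. teq2 sA sZ (alpha (z * w)) (tmul (alpha z) (alpha w))) \<and>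
     teq2 sA sZ (alpha 1) (delta (1, 1))"

text \<open>the map (id (x) m_Z)(alpha (x) id) : Z (x) Z -> A (x) Z on representatives\<close>
definition galois_map :: "('z::times \<Rightarrow> ('a::ring_1 \<times> 'z \<Rightarrow> 'k::field)) \<Rightarrow> ('z \<times> 'z \<Rightarrow> 'k) \<Rightarrow> ('a \<times> 'z \<Rightarrow> 'k)" where
  "galois_map alpha F = fext (\<lambda>(z, w). tmul (alpha z) (delta (1, w))) F"

text \<open>Z is a nonzero comodule algebra (nonzero is automatic: 'z is of class ring_1)
  whose Galois map is a (well-defined) bijection Z (x) Z -> A (x) Z.\<close>
definition galois_extension :: "('k::field \<Rightarrow> 'a::ring_1 \<Rightarrow> 'a) \<Rightarrow> ('a \<Rightarrow> ('a \<times> 'a \<Rightarrow> 'k))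
    \<Rightarrow> ('a \<Rightarrow> 'k) \<Rightarrow> ('k \<Rightarrow> 'z::ring_1 \<Rightarrow> 'z) \<Rightarrow> ('z \<Rightarrow> ('a \<times> 'z \<Rightarrow> 'k)) \<Rightarrow> bool" where
  "galois_extension sA Delta eps sZ alpha \<longleftrightarrow>
     comodule_algebra sA Delta eps sZ alpha \<and>
     (\<forall>F G. fsupp F \<longrightarrow> fsupp G \<longrightarrow>
        (teq2 sZ sZ F G \<longleftrightarrow> teq2 sA sZ (galois_map alpha F) (galois_map alpha G))) \<and>
     (\<forall>H. fsupp H \<longrightarrow> (\<exists>F. fsupp F \<and> teq2 sA sZ (galois_map alpha F) H))"

definition haar_measure :: "('k::field \<Rightarrow> 'a::ring_1 \<Rightarrow> 'a) \<Rightarrow> ('k \<Rightarrow> 'z::ring_1 \<Rightarrow> 'z)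
    \<Rightarrow> ('z \<Rightarrow> ('a \<times> 'z \<Rightarrow> 'k)) \<Rightarrow> ('z \<Rightarrow> 'k) \<Rightarrow> bool" where
  "haar_measure sA sZ alpha mu \<longleftrightarrow>
     Vector_Spaces.linear sZ (*) mu \<and>
     (\<forall>z. fsumv sA (\<lambda>(a, w). sA (mu w) a) (alpha z) = sA (mu z) 1) \<and>
     mu 1 = 1"

end

theory Submission
  imports Defs
begin

text \<open>
  The Haar measure \<open>J\<close> of \<open>A\<close> is automatically invariant on the other side as well:
  \<open>\<Sum> J(a\<^sub>1) a\<^sub>2 = J(a) 1\<close>.  This is a Maschke-type argument: averaging the projection
  onto the kernel of \<open>avg a = \<Sum> J(a\<^sub>1) a\<^sub>2\<close> with \<open>J\<close> and the antipode yields a projection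
  commuting with the action of the convolution algebra \<open>A\<^sup>*\<close>, and this forces
  \<open>J * h = h(1) J\<close> for every functional \<open>h\<close>.

  On the Galois extension put \<open>P z = \<Sum> J(z\<^sub>-\<^sub>1) z\<^sub>0\<close> (\<open>coinv_avg\<close> below).  By the
  invariance just proved, every \<open>P z\<close> is coinvariant, so the Galois map identifies
  \<open>P z \<otimes> 1\<close> with \<open>1 \<otimes> P z\<close> and injectivity makes \<open>P z\<close> a scalar multiple of \<open>1\<close>.
  For a functional \<open>f\<close> with \<open>f 1 = 1\<close>, the left invariance of \<open>J\<close> shows that \<open>f \<circ> P\<close>
  is a Haar measure, while every Haar measure \<open>\<mu>\<close> satisfies \<open>\<mu> = \<mu> \<circ> P = f \<circ> P\<close>.
\<close>

section \<open>Linear maps and finitely supported sums\<close>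

text \<open>Additivity and homogeneity only: unlike \<open>Vector_Spaces.linear\<close>, the vector space axioms
  of domain and codomain are not bundled in.\<close>

definition klinear :: "('k::field \<Rightarrow> 'v::ab_group_add \<Rightarrow> 'v) \<Rightarrow> ('k \<Rightarrow> 'w::ab_group_add \<Rightarrow> 'w)
    \<Rightarrow> ('v \<Rightarrow> 'w) \<Rightarrow> bool" where
  "klinear s1 s2 f \<longleftrightarrow> (\<forall>x y. f (x + y) = f x + f y) \<and> (\<forall>c x. f (s1 c x) = s2 c (f x))"

definition kbilinear :: "('k::field \<Rightarrow> 'u::ab_group_add \<Rightarrow> 'u) \<Rightarrow> ('k \<Rightarrow> 'v::ab_group_add \<Rightarrow> 'v)
    \<Rightarrow> ('k \<Rightarrow> 'w::ab_group_add \<Rightarrow> 'w) \<Rightarrow> ('u \<Rightarrow> 'v \<Rightarrow> 'w) \<Rightarrow> bool" where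
  "kbilinear s1 s2 s3 g \<longleftrightarrow> (\<forall>y. klinear s1 s3 (\<lambda>x. g x y)) \<and> (\<forall>x. klinear s2 s3 (g x))"

definition ktrilinear :: "('k::field \<Rightarrow> 'u::ab_group_add \<Rightarrow> 'u) \<Rightarrow> ('k \<Rightarrow> 'v::ab_group_add \<Rightarrow> 'v)
    \<Rightarrow> ('k \<Rightarrow> 'w::ab_group_add \<Rightarrow> 'w) \<Rightarrow> ('k \<Rightarrow> 'x::ab_group_add \<Rightarrow> 'x)
    \<Rightarrow> ('u \<Rightarrow> 'v \<Rightarrow> 'w \<Rightarrow> 'x) \<Rightarrow> bool" where
  "ktrilinear s1 s2 s3 s4 g \<longleftrightarrow> (\<forall>y z. klinear s1 s4 (\<lambda>x. g x y z)) \<and>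
     (\<forall>x z. klinear s2 s4 (\<lambda>y. g x y z)) \<and> (\<forall>x y. klinear s3 s4 (g x y))"

lemma klinearD:
  assumes "klinear s1 s2 f"
  shows "f (x + y) = f x + f y" "f (s1 c x) = s2 c (f x)"
  using assms unfolding klinear_def by blast+

lemma kbilinearD:
  assumes "kbilinear s1 s2 s3 B"
  shows "B (x + x') y = B x y + B x' y" "B x (y + y') = B x y + B x y'"
    "B (s1 c x) y = s3 c (B x y)" "B x (s2 c y) = s3 c (B x y)"
  using assms unfolding kbilinear_def klinear_def by blast+

lemma ktrilinearD:
  assumes "ktrilinear s1 s2 s3 s4 g"
  shows "g (x + x') y z = g x y z + g x' y z" "g x (y + y') z = g x y z + g x y' z"
    "g x y (z + z') = g x y z + g x y z'"
    "g (s1 c x) y z = s4 c (g x y z)" "g x (s2 c y) z = s4 c (g x y z)"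
    "g x y (s3 c z) = s4 c (g x y z)"
  using assms unfolding ktrilinear_def klinear_def by blast+

lemma klinear_zero: "klinear s1 s2 f \<Longrightarrow> f 0 = 0"
  using klinearD(1)[of s1 s2 f 0 0] by simp

lemma klinear_minus: "klinear s1 s2 f \<Longrightarrow> f (- x) = - f x"
  using klinearD(1)[of s1 s2 f "- x" x] klinear_zero[of s1 s2 f] by (simp add: eq_neg_iff_add_eq_0)

lemma klinear_diff: "klinear s1 s2 f \<Longrightarrow> f (x - y) = f x - f y"
  using klinearD(1)[of s1 s2 f x "- y"] klinear_minus[of s1 s2 f y] by simp

lemma klinear_sum:
  assumes "klinear s1 s2 f"
  shows "f (sum g A) = (\<Sum>x\<in>A. f (g x))"
  by (induct A rule: infinite_finite_induct)
      (simp_all add: klinearD(1)[OF assms] klinear_zero[OF assms])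

lemma klinear_id: "klinear s s (\<lambda>x. x)"
  unfolding klinear_def by simp

lemma linear_imp_klinear: "Vector_Spaces.linear s1 s2 f \<Longrightarrow> klinear s1 s2 f"
  unfolding klinear_def module_hom_iff_linear[symmetric] module_hom_iff by blast

lemma klinear_imp_linear:
  "vector_space s1 \<Longrightarrow> vector_space s2 \<Longrightarrow> klinear s1 s2 f \<Longrightarrow> Vector_Spaces.linear s1 s2 f"
  by (simp add: module_hom_iff_linear[symmetric] module_hom_iff module_iff_vector_space klinear_def)

lemma vector_space_mult: "vector_space ((*) :: 'k::field \<Rightarrow> 'k \<Rightarrow> 'k)"
  by unfold_locales (auto simp: algebra_simps)

lemma vector_space_scale_simps:
  assumes "vector_space s"
  shows "s c (x + y) = s c x + s c y" "s (a + b) x = s a x + s b x" "s a (s b x) = s (a * b) x"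
    "s 1 x = x" "s 0 x = 0" "s c 0 = 0" "s c (x - y) = s c x - s c y" "s (a - b) x = s a x - s b x"
    "s c (- x) = - s c x" "s (- a) x = - s a x"
proof -
  interpret V: vector_space s by fact
  show "s c (x + y) = s c x + s c y" "s (a + b) x = s a x + s b x" "s a (s b x) = s (a * b) x"
    "s 1 x = x" "s 0 x = 0" "s c 0 = 0" "s c (x - y) = s c x - s c y" "s (a - b) x = s a x - s b x"
    "s c (- x) = - s c x" "s (- a) x = - s a x"
    by (simp_all add: V.scale_right_distrib V.scale_left_distrib V.scale_right_diff_distrib
        V.scale_left_diff_distrib)
qed

lemma exists_functional_eq_1:
  fixes s :: "'k::field \<Rightarrow> 'v::ab_group_add \<Rightarrow> 'v"
  assumes "vector_space s" and "x \<noteq> 0"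
  shows "\<exists>f. klinear s (*) f \<and> f x = 1"
proof -
  interpret vector_space_pair s "(*) :: 'k \<Rightarrow> 'k \<Rightarrow> 'k"
    by (intro vector_space_pair.intro assms(1) vector_space_mult)
  have "vs1.independent {x}" using assms(2) by simp
  from linear_independent_extend[OF this, of "\<lambda>_. 1"]
  obtain g where "Vector_Spaces.linear s (*) g" "g x = 1" by auto
  then show ?thesis using linear_imp_klinear by blast
qed

lemma eq_if_functionals_eq:
  fixes s :: "'k::field \<Rightarrow> 'v::ab_group_add \<Rightarrow> 'v"
  assumes "vector_space s" and "\<And>f. klinear s (*) f \<Longrightarrow> f x = f y"
  shows "x = y"
proof (rule ccontr)
  assume "x \<noteq> y"
  then obtain f where f: "klinear s (*) f" "f (x - y) = 1"
    using exists_functional_eq_1[OF assms(1)] by (metis right_minus_eq)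
  then show False using assms(2)[OF f(1)] by (simp add: klinear_diff)
qed

lemma supp_delta: "supp (delta p :: 'x \<Rightarrow> 'k::zero_neq_one) = {p}"
  by (auto simp: supp_def delta_def)

lemma fsupp_delta [simp]: "fsupp (delta p :: 'x \<Rightarrow> 'k::zero_neq_one)"
  by (simp add: fsupp_def supp_delta)

lemma fsupp_zero [simp]: "fsupp (\<lambda>x. 0)"
  unfolding fsupp_def supp_def by simp

lemma fsupp_add: "fsupp f \<Longrightarrow> fsupp g \<Longrightarrow> fsupp (\<lambda>x. f x + g x :: 'k::comm_monoid_add)"
  unfolding fsupp_def supp_def by (rule finite_subset[of _ "{x. f x \<noteq> 0} \<union> {x. g x \<noteq> 0}"]) auto

lemma fsupp_diff: "fsupp f \<Longrightarrow> fsupp g \<Longrightarrow> fsupp (\<lambda>x. f x - g x :: 'k::ab_group_add)"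
  unfolding fsupp_def supp_def by (rule finite_subset[of _ "{x. f x \<noteq> 0} \<union> {x. g x \<noteq> 0}"]) auto

lemma fsupp_mult: "fsupp f \<Longrightarrow> fsupp (\<lambda>x. c * f x :: 'k::mult_zero)"
  unfolding fsupp_def supp_def by (rule finite_subset[of _ "{x. f x \<noteq> 0}"]) auto

lemma fsupp_eq_sum_delta:
  fixes F :: "'x \<Rightarrow> 'k::field"
  assumes "fsupp F"
  shows "F t = (\<Sum>u\<in>supp F. F u * delta u t)"
proof -
  have "(\<Sum>u\<in>supp F. F u * delta u t) = (\<Sum>u\<in>supp F. if u = t then F u else 0)"
    by (rule sum.cong) (auto simp: delta_def)
  also have "\<dots> = F t" using assms by (simp add: fsupp_def) (auto simp: supp_def)
  finally show ?thesis by simp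
qed

lemma fsumv_superset:
  assumes "vector_space s" "finite T" "supp f \<subseteq> T"
  shows "fsumv s g f = (\<Sum>x\<in>T. s (f x) (g x))"
proof -
  interpret V: vector_space s by fact
  show ?thesis unfolding fsumv_def
    by (rule sum.mono_neutral_left) (use assms in \<open>auto simp: supp_def\<close>)
qed

lemma fsumv_add:
  assumes "vector_space s" "fsupp f" "fsupp f'"
  shows "fsumv s g (\<lambda>x. f x + f' x) = fsumv s g f + fsumv s g f'"
proof -
  interpret V: vector_space s by fact
  let ?T = "supp f \<union> supp f'"
  have T: "finite ?T" using assms by (simp add: fsupp_def)
  have "fsumv s g (\<lambda>x. f x + f' x) = (\<Sum>x\<in>?T. s (f x + f' x) (g x))"
    by (rule fsumv_superset[OF assms(1) T]) (auto simp: supp_def)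
  also have "\<dots> = (\<Sum>x\<in>?T. s (f x) (g x)) + (\<Sum>x\<in>?T. s (f' x) (g x))"
    by (simp add: V.scale_left_distrib sum.distrib)
  also have "\<dots> = fsumv s g f + fsumv s g f'"
    using fsumv_superset[OF assms(1) T, of f g] fsumv_superset[OF assms(1) T, of f' g] by auto
  finally show ?thesis .
qed

lemma fsumv_scale:
  assumes "vector_space s" "fsupp f"
  shows "fsumv s g (\<lambda>x. c * f x) = s c (fsumv s g f)"
proof -
  interpret V: vector_space s by fact
  have "fsumv s g (\<lambda>x. c * f x) = (\<Sum>x\<in>supp f. s (c * f x) (g x))"
    by (rule fsumv_superset) (use assms in \<open>auto simp: supp_def fsupp_def\<close>)
  also have "\<dots> = s c (fsumv s g f)"
    by (simp add: fsumv_def V.scale_sum_right)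
  finally show ?thesis .
qed

lemma fsumv_diff:
  assumes "vector_space s" "fsupp f" "fsupp f'"
  shows "fsumv s g (\<lambda>x. f x - f' x) = fsumv s g f - fsumv s g f'"
proof -
  interpret V: vector_space s by fact
  have "fsumv s g (\<lambda>x. f x + (-1) * f' x) = fsumv s g f + fsumv s g (\<lambda>x. (-1) * f' x)"
    using assms by (intro fsumv_add fsupp_mult)
  then show ?thesis using fsumv_scale[OF assms(1,3), of g "-1"] by simp
qed

lemma fsumv_zero: "fsumv s g (\<lambda>x. 0) = 0"
  by (simp add: fsumv_def supp_def)

lemma fsumv_delta: "vector_space s \<Longrightarrow> fsumv s g (delta p) = g p"
  unfolding fsumv_def supp_delta by (simp add: delta_def vector_space_scale_simps)

lemma fsumv_add_map:
  "vector_space s \<Longrightarrow> fsumv s (\<lambda>x. g x + g' x) f = fsumv s g f + fsumv s g' f"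
  by (simp add: fsumv_def vector_space_scale_simps sum.distrib)

lemma fsumv_diff_map:
  "vector_space s \<Longrightarrow> fsumv s (\<lambda>x. g x - g' x) f = fsumv s g f - fsumv s g' f"
  by (simp add: fsumv_def vector_space_scale_simps sum_subtractf)

lemma fsumv_scale_map:
  assumes "vector_space s"
  shows "fsumv s (\<lambda>x. s c (g x)) f = s c (fsumv s g f)"
proof -
  interpret V: vector_space s by fact
  show ?thesis by (simp add: fsumv_def V.scale_sum_right mult.commute)
qed

lemma fsumv_zero_map: "vector_space s \<Longrightarrow> fsumv s (\<lambda>x. 0) f = 0"
  by (simp add: fsumv_def vector_space_scale_simps)

lemma klinear_fsumv: "klinear s1 s2 L \<Longrightarrow> L (fsumv s1 g f) = fsumv s2 (\<lambda>x. L (g x)) f"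
  unfolding fsumv_def by (simp add: klinear_sum klinearD(2))

lemma fsumv_swap:
  assumes "vector_space s"
  shows "fsumv s (\<lambda>x. fsumv s (G x) f2) f1 = fsumv s (\<lambda>y. fsumv s (\<lambda>x. G x y) f1) f2"
proof -
  interpret V: vector_space s by fact
  show ?thesis unfolding fsumv_def V.scale_sum_right
    by (subst sum.swap) (simp add: mult.commute)
qed

section \<open>Tensor products\<close>

lemma fspan_base: "g \<in> G \<Longrightarrow> g \<in> fspan G"
  using fspan.step[of g G "\<lambda>_. 0" 1] by (simp add: fspan.zero)

lemma fspan_add: "f \<in> fspan G \<Longrightarrow> g \<in> fspan G \<Longrightarrow> (\<lambda>x. f x + g x) \<in> fspan G"
proof (induction f rule: fspan.induct)
  case (step g0 f c)
  then show ?case using fspan.step[of g0 G "\<lambda>x. f x + g x" c] by (simp add: add.assoc)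
qed simp

lemma fspan_mult: "f \<in> fspan G \<Longrightarrow> (\<lambda>x. c * f x) \<in> fspan G"
proof (induction f rule: fspan.induct)
  case zero
  then show ?case by (simp add: fspan.zero)
next
  case (step g0 f d)
  then show ?case using fspan.step[of g0 G "\<lambda>x. c * f x" "c * d"] by (simp add: algebra_simps)
qed

lemma fspan_diff: "f \<in> fspan G \<Longrightarrow> g \<in> fspan G \<Longrightarrow> (\<lambda>x. f x - g x) \<in> fspan G"
  using fspan_add[of f G "\<lambda>x. (-1) * g x"] fspan_mult[of g G "-1"] by simp

lemma fspan_sum:
  "finite I \<Longrightarrow> (\<And>i. i \<in> I \<Longrightarrow> f i \<in> fspan G) \<Longrightarrow> (\<lambda>x. \<Sum>i\<in>I. f i x) \<in> fspan G"
proof (induction I rule: finite_induct)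
  case empty
  then show ?case by (simp add: fspan.zero)
next
  case (insert i I)
  then show ?case using fspan_add[of "f i" G "\<lambda>x. \<Sum>i\<in>I. f i x"] by simp
qed

lemma fsupp_fspan:
  assumes "\<And>g. g \<in> G \<Longrightarrow> fsupp g"
  shows "f \<in> fspan G \<Longrightarrow> fsupp f"
  by (induction f rule: fspan.induct) (simp_all add: fsupp_add fsupp_mult assms)

lemma fsumv_fspan_eq_0:
  assumes "vector_space s" "\<And>g. g \<in> G \<Longrightarrow> fsupp g \<and> fsumv s h g = 0" "f \<in> fspan G"
  shows "fsumv s h f = 0"
  using assms(3)
proof (induction f rule: fspan.induct)
  case zero
  then show ?case by (simp add: fsumv_zero)
next
  case (step g f c)
  have "fsupp f" using fsupp_fspan[OF _ step(2)] assms(2) by blast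
  then show ?case using step assms(2)[of g]
    by (simp add: fsumv_add[OF assms(1)] fsupp_mult fsumv_scale[OF assms(1)]
        vector_space_scale_simps[OF assms(1)])
qed

lemma teq2_fsumv_eq:
  assumes vs: "vector_space s" and B: "kbilinear sV sW s B"
    and F: "fsupp F" and G: "fsupp G" and eq: "teq2 sV sW F G"
  shows "fsumv s (case_prod B) F = fsumv s (case_prod B) G"
proof -
  have "fsumv s (case_prod B) (\<lambda>p. F p - G p) = 0"
  proof (rule fsumv_fspan_eq_0[OF vs _ eq[unfolded teq2_def]])
    fix g assume "g \<in> rel2 sV sW"
    then show "fsupp g \<and> fsumv s (case_prod B) g = 0"
      unfolding rel2_def
      by (auto simp: fsumv_diff[OF vs] fsupp_diff fsumv_delta[OF vs] fsumv_scale[OF vs] fsupp_mult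
          kbilinearD[OF B])
  qed
  then show ?thesis using fsumv_diff[OF vs F G] by simp
qed

lemma teq3_fsumv_eq:
  assumes vs: "vector_space s" and g: "ktrilinear sU sV sW s g"
    and F: "fsupp F" and G: "fsupp G" and eq: "teq3 sU sV sW F G"
  shows "fsumv s (\<lambda>(x, y, z). g x y z) F = fsumv s (\<lambda>(x, y, z). g x y z) G"
proof -
  have "fsumv s (\<lambda>(x, y, z). g x y z) (\<lambda>p. F p - G p) = 0"
  proof (rule fsumv_fspan_eq_0[OF vs _ eq[unfolded teq3_def]])
    fix r assume "r \<in> rel3 sU sV sW"
    then show "fsupp r \<and> fsumv s (\<lambda>(x, y, z). g x y z) r = 0"
      unfolding rel3_def
      by (elim UnE; clarsimp simp: fsumv_diff[OF vs] fsupp_diff fsumv_delta[OF vs]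
          fsumv_scale[OF vs] fsupp_mult ktrilinearD[OF g])
  qed
  then show ?thesis using fsumv_diff[OF vs F G] by simp
qed

lemma teq2_delta_sum_left:
  fixes sV :: "'k::field \<Rightarrow> 'v::ab_group_add \<Rightarrow> 'v" and sW :: "'k \<Rightarrow> 'w::ab_group_add \<Rightarrow> 'w"
  assumes "finite I"
  shows "teq2 sV sW (delta (\<Sum>i\<in>I. sV (c i) (v i), w)) (\<lambda>t. \<Sum>i\<in>I. c i * delta (v i, w) t)"
  using assms unfolding teq2_def
proof (induction I rule: finite_induct)
  case empty
  have "(\<lambda>p. delta (0 + 0, w) p - delta (0, w) p - delta (0, w) p) \<in> fspan (rel2 sV sW)"
    unfolding rel2_def by (intro fspan_base) blast
  from fspan_mult[OF this, of "-1"] show ?case by simp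
next
  case (insert j I)
  let ?X = "\<Sum>i\<in>I. sV (c i) (v i)" and ?y = "sV (c j) (v j)"
  have "(\<lambda>p. delta (?y + ?X, w) p - delta (?y, w) p - delta (?X, w) p) \<in> fspan (rel2 sV sW)"
    "(\<lambda>p. delta (?y, w) p - c j * delta (v j, w) p) \<in> fspan (rel2 sV sW)"
    unfolding rel2_def by (intro fspan_base; blast)+
  from fspan_add[OF this(1) fspan_add[OF this(2) insert.IH]] show ?case
    using insert.hyps by (simp add: algebra_simps)
qed

lemma teq2_delta_sum_right:
  fixes sV :: "'k::field \<Rightarrow> 'v::ab_group_add \<Rightarrow> 'v" and sW :: "'k \<Rightarrow> 'w::ab_group_add \<Rightarrow> 'w"
  assumes "finite I"
  shows "teq2 sV sW (delta (x, \<Sum>i\<in>I. sW (c i) (v i))) (\<lambda>t. \<Sum>i\<in>I. c i * delta (x, v i) t)"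
  using assms unfolding teq2_def
proof (induction I rule: finite_induct)
  case empty
  have "(\<lambda>p. delta (x, 0 + 0) p - delta (x, 0) p - delta (x, 0) p) \<in> fspan (rel2 sV sW)"
    unfolding rel2_def by (intro fspan_base) blast
  from fspan_mult[OF this, of "-1"] show ?case by simp
next
  case (insert j I)
  let ?X = "\<Sum>i\<in>I. sW (c i) (v i)" and ?y = "sW (c j) (v j)"
  have "(\<lambda>p. delta (x, ?y + ?X) p - delta (x, ?y) p - delta (x, ?X) p) \<in> fspan (rel2 sV sW)"
    "(\<lambda>p. delta (x, ?y) p - c j * delta (x, v j) p) \<in> fspan (rel2 sV sW)"
    unfolding rel2_def by (intro fspan_base; blast)+
  from fspan_add[OF this(1) fspan_add[OF this(2) insert.IH]] show ?case
    using insert.hyps by (simp add: algebra_simps)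
qed

context vector_space_pair
begin

lemma teq2_delta_representation:
  assumes B1: "vs1.independent B1" "UNIV \<subseteq> vs1.span B1"
    and B2: "vs2.independent B2" "UNIV \<subseteq> vs2.span B2"
  shows "teq2 s1 s2 (delta (x, y))
           (\<lambda>t. vs1.representation B1 x (fst t) * vs2.representation B2 y (snd t))"
proof -
  let ?r1 = "vs1.representation B1 x" and ?r2 = "vs2.representation B2 y"
  let ?P = "{b. ?r1 b \<noteq> 0}" and ?Q = "{b. ?r2 b \<noteq> 0}"
  have P: "finite ?P" and Q: "finite ?Q"
    by (rule vs1.finite_representation vs2.finite_representation)+
  have x: "(\<Sum>b\<in>?P. s1 (?r1 b) b) = x" and y: "(\<Sum>b\<in>?Q. s2 (?r2 b) b) = y"
    using vs1.sum_nonzero_representation_eq[OF B1(1)] vs2.sum_nonzero_representation_eq[OF B2(1)]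
      B1(2) B2(2) by blast+
  have left: "(\<lambda>t. delta (x, y) t - (\<Sum>p\<in>?P. ?r1 p * delta (p, y) t)) \<in> fspan (rel2 s1 s2)"
    using teq2_delta_sum_left[OF P, where sV = s1 and sW = s2 and c = ?r1 and v = "\<lambda>p. p"
        and w = y]
      unfolding teq2_def x .
  have "(\<lambda>t. delta (p, y) t - (\<Sum>q\<in>?Q. ?r2 q * delta (p, q) t)) \<in> fspan (rel2 s1 s2)" for p
    using teq2_delta_sum_right[OF Q, where sV = s1 and sW = s2 and c = ?r2 and v = "\<lambda>q. q"
        and x = p]
      unfolding teq2_def y .
  then have right: "(\<lambda>t. \<Sum>p\<in>?P. ?r1 p * (delta (p, y) t - (\<Sum>q\<in>?Q. ?r2 q * delta (p, q) t)))
      \<in> fspan (rel2 s1 s2)"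
    by (intro fspan_sum[OF P] fspan_mult)
  have coords: "(\<Sum>p\<in>?P. ?r1 p * (\<Sum>q\<in>?Q. ?r2 q * delta (p, q) t)) = ?r1 (fst t) * ?r2 (snd t)" for t
  proof -
    have "(\<Sum>q\<in>?Q. ?r2 q * delta (p, q) t) = (if p = fst t then ?r2 (snd t) else 0)" for p
      using Q by (cases t) (auto simp: delta_def if_distrib cong: if_cong)
    then have "(\<Sum>p\<in>?P. ?r1 p * (\<Sum>q\<in>?Q. ?r2 q * delta (p, q) t))
        = (\<Sum>p\<in>?P. if p = fst t then ?r1 p * ?r2 (snd t) else 0)"
      by (intro sum.cong) auto
    then show ?thesis using P by auto
  qed
  from fspan_add[OF left right] show ?thesis
    unfolding teq2_def by (simp add: coords[symmetric] right_diff_distrib sum_subtractf)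
qed

lemma teq2_if_bilinear_forms_eq:
  assumes F: "fsupp F" and G: "fsupp G"
    and eq: "\<And>B. kbilinear s1 s2 (*) B \<Longrightarrow> fsumv (*) (case_prod B) F = fsumv (*) (case_prod B) G"
  shows "teq2 s1 s2 F G"
proof -
  obtain B1 where B1: "vs1.independent B1" "UNIV \<subseteq> vs1.span B1"
    using vs1.basis_exists[of UNIV] by blast
  obtain B2 where B2: "vs2.independent B2" "UNIV \<subseteq> vs2.span B2"
    using vs2.basis_exists[of UNIV] by blast
  define coord where
    "coord t x y = vs1.representation B1 x (fst t) * vs2.representation B2 y (snd t)" for t x y
  have "kbilinear s1 s2 (*) (coord t)" for t
    using B1 B2 unfolding kbilinear_def klinear_def coord_def
    by (auto simp: vs1.representation_add vs1.representation_scale vs2.representation_add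
        vs2.representation_scale algebra_simps subset_eq)
  then have coords_eq: "fsumv (*) (case_prod (coord t)) F = fsumv (*) (case_prod (coord t)) G" for t
    by (rule eq)
  have expand: "(\<lambda>t. H t - fsumv (*) (case_prod (coord t)) H) \<in> fspan (rel2 s1 s2)"
    if "fsupp H" for H
  proof -
    have "(\<lambda>t. \<Sum>u\<in>supp H. H u * (delta u t - coord t (fst u) (snd u))) \<in> fspan (rel2 s1 s2)"
      using that teq2_delta_representation[OF B1 B2] unfolding fsupp_def teq2_def coord_def
      by (intro fspan_sum fspan_mult) auto
    moreover have "(\<Sum>u\<in>supp H. H u * (delta u t - coord t (fst u) (snd u)))
        = H t - fsumv (*) (case_prod (coord t)) H" for t
      by (simp add: fsumv_def right_diff_distrib sum_subtractf case_prod_beta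
          fsupp_eq_sum_delta[OF that, of t, symmetric])
    ultimately show ?thesis by simp
  qed
  from fspan_diff[OF expand[OF F] expand[OF G]] show ?thesis
    unfolding teq2_def coords_eq by simp
qed

end

lemma fext_delta: "fext h (delta p :: 'x \<Rightarrow> 'k::field) = h p"
  unfolding fext_def supp_delta by (simp add: delta_def)

lemma supp_fext: "supp (fext h f) \<subseteq> (\<Union>x\<in>supp f. supp (h x))"
proof
  fix y assume "y \<in> supp (fext h f)"
  then have "(\<Sum>x\<in>supp f. f x * h x y) \<noteq> 0" by (simp add: supp_def fext_def)
  then obtain x where "x \<in> supp f" "f x * h x y \<noteq> 0" by (meson sum.neutral)
  then show "y \<in> (\<Union>x\<in>supp f. supp (h x))" by (auto simp: supp_def)
qed

lemma fsupp_fext: "fsupp f \<Longrightarrow> (\<And>x. x \<in> supp f \<Longrightarrow> fsupp (h x)) \<Longrightarrow> fsupp (fext h f)"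
  unfolding fsupp_def by (rule finite_subset[OF supp_fext]) (rule finite_UN_I, auto)

lemma fsumv_fext:
  assumes vs: "vector_space s" and f: "fsupp f" and h: "\<And>x. x \<in> supp f \<Longrightarrow> fsupp (h x)"
  shows "fsumv s G (fext h f) = fsumv s (\<lambda>x. fsumv s G (h x)) f"
proof -
  interpret V: vector_space s by fact
  let ?T = "\<Union>x\<in>supp f. supp (h x)"
  have T: "finite ?T" using f h by (auto simp: fsupp_def)
  have hT: "fsumv s G (h x) = (\<Sum>y\<in>?T. s (h x y) (G y))" if "x \<in> supp f" for x
    by (rule fsumv_superset[OF vs T]) (use that in auto)
  have "fsumv s G (fext h f) = (\<Sum>y\<in>?T. s (fext h f y) (G y))"
    by (rule fsumv_superset[OF vs T supp_fext])
  also have "\<dots> = (\<Sum>x\<in>supp f. s (f x) (\<Sum>y\<in>?T. s (h x y) (G y)))"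
    by (simp add: fext_def V.scale_sum_left V.scale_sum_right sum.swap[of _ ?T])
  also have "\<dots> = (\<Sum>x\<in>supp f. s (f x) (fsumv s G (h x)))"
    by (rule sum.cong[OF refl]) (simp add: hT)
  also have "\<dots> = fsumv s (\<lambda>x. fsumv s G (h x)) f"
    by (simp only: fsumv_def[of s "\<lambda>x. fsumv s G (h x)" f])
  finally show ?thesis .
qed

lemma fsupp_map_left: "fsupp f \<Longrightarrow> (\<And>a. fsupp (h a)) \<Longrightarrow> fsupp (map_left h f)"
  unfolding map_left_def split_def by (intro fsupp_fext) simp_all

lemma fsupp_map_right: "fsupp f \<Longrightarrow> (\<And>a. fsupp (h a)) \<Longrightarrow> fsupp (map_right h f)"
  unfolding map_right_def split_def by (intro fsupp_fext) simp_all

lemma fsupp_tmul: "fsupp f \<Longrightarrow> fsupp g \<Longrightarrow> fsupp (tmul f g)"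
  unfolding tmul_def by (intro fsupp_fext) simp_all

lemma fsumv_map_left:
  assumes "vector_space s" "fsupp f" "\<And>a. fsupp (h a)"
  shows "fsumv s G (map_left h f)
    = fsumv s (\<lambda>p. fsumv s (\<lambda>q. G (fst q, snd q, snd p)) (h (fst p))) f"
  unfolding map_left_def split_def
  using assms by (simp add: fsumv_fext fsupp_fext fsumv_delta)

lemma fsumv_map_right:
  assumes "vector_space s" "fsupp f" "\<And>a. fsupp (h a)"
  shows "fsumv s G (map_right h f)
    = fsumv s (\<lambda>p. fsumv s (\<lambda>q. G (fst p, fst q, snd q)) (h (snd p))) f"
  unfolding map_right_def split_def
  using assms by (simp add: fsumv_fext fsupp_fext fsumv_delta)

lemma fsumv_tmul:
  assumes "vector_space s" "fsupp f" "fsupp g"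
  shows "fsumv s G (tmul f g) = fsumv s (\<lambda>p. fsumv s (\<lambda>q. G (fst p * fst q, snd p * snd q)) g) f"
  unfolding tmul_def
  using assms by (simp add: fsumv_fext fsupp_fext fsumv_delta)

lemma fsumv_tmul_delta:
  fixes F :: "'a::monoid_mult \<times> 'z::times \<Rightarrow> 'k::field"
  assumes "fsupp F"
  shows "fsumv (*) (case_prod B) (tmul F (delta (1, u))) = fsumv (*) (\<lambda>(a, w). B a (w * u)) F"
  unfolding fsumv_tmul[OF vector_space_mult assms fsupp_delta]
  by (simp add: fsumv_delta[OF vector_space_mult] case_prod_beta')

section \<open>Hopf algebras\<close>

locale hopf =
  fixes sA :: "'k::field \<Rightarrow> 'a::ring_1 \<Rightarrow> 'a" and Delta :: "'a \<Rightarrow> ('a \<times> 'a \<Rightarrow> 'k)"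
    and eps :: "'a \<Rightarrow> 'k" and S :: "'a \<Rightarrow> 'a"
  assumes vector_space_A: "vector_space sA"
    and scale_mult_left: "\<And>c x y. sA c x * y = sA c (x * y)"
    and scale_mult_right: "\<And>c x y. x * sA c y = sA c (x * y)"
    and fsupp_Delta: "\<And>x. fsupp (Delta x)"
    and Delta_add: "\<And>x y. teq2 sA sA (Delta (x + y)) (\<lambda>p. Delta x p + Delta y p)"
    and Delta_scale: "\<And>c x. teq2 sA sA (Delta (sA c x)) (\<lambda>p. c * Delta x p)"
    and coassoc: "\<And>a. teq3 sA sA sA (map_left Delta (Delta a)) (map_right Delta (Delta a))"
    and klinear_eps: "klinear sA (*) eps"
    and counit_left: "\<And>a. fsumv sA (\<lambda>(x, y). sA (eps x) y) (Delta a) = a"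
    and counit_right: "\<And>a. fsumv sA (\<lambda>(x, y). sA (eps y) x) (Delta a) = a"
    and Delta_mult: "\<And>x y. teq2 sA sA (Delta (x * y)) (tmul (Delta x) (Delta y))"
    and Delta_one: "teq2 sA sA (Delta 1) (delta (1, 1))"
    and eps_one: "eps 1 = 1"
    and klinear_S: "klinear sA sA S"
    and antipode_left: "\<And>a. fsumv sA (\<lambda>(x, y). S x * y) (Delta a) = sA (eps a) 1"
    and antipode_right: "\<And>a. fsumv sA (\<lambda>(x, y). x * S y) (Delta a) = sA (eps a) 1"
begin

lemmas scale_A_simps = vector_space_scale_simps[OF vector_space_A]
lemmas S_simps = klinearD[OF klinear_S] klinear_zero[OF klinear_S]
lemmas eps_simps = klinearD[OF klinear_eps] klinear_zero[OF klinear_eps]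
lemmas linearity_simps = ktrilinear_def kbilinear_def klinear_def mult.commute scale_A_simps
  scale_mult_left scale_mult_right S_simps eps_simps distrib_left distrib_right mult.assoc

definition comult_sum :: "('k \<Rightarrow> 'v::ab_group_add \<Rightarrow> 'v) \<Rightarrow> ('a \<Rightarrow> 'a \<Rightarrow> 'v) \<Rightarrow> 'a \<Rightarrow> 'v" where
  "comult_sum s g a = fsumv s (case_prod g) (Delta a)"

lemma comult_sum_add_map:
  "vector_space s \<Longrightarrow> comult_sum s (\<lambda>x y. g x y + h x y) a = comult_sum s g a + comult_sum s h a"
  unfolding comult_sum_def using fsumv_add_map[of s "case_prod g" "case_prod h"]
  by (simp add: case_prod_beta')

lemma comult_sum_diff_map:
  "vector_space s \<Longrightarrow> comult_sum s (\<lambda>x y. g x y - h x y) a = comult_sum s g a - comult_sum s h a"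
  unfolding comult_sum_def using fsumv_diff_map[of s "case_prod g" "case_prod h"]
  by (simp add: case_prod_beta')

lemma comult_sum_scale_map:
  "vector_space s \<Longrightarrow> comult_sum s (\<lambda>x y. s c (g x y)) a = s c (comult_sum s g a)"
  unfolding comult_sum_def using fsumv_scale_map[of s c "case_prod g"]
  by (simp add: case_prod_beta')

lemma comult_sum_zero_map: "vector_space s \<Longrightarrow> comult_sum s (\<lambda>x y. 0) a = 0"
  unfolding comult_sum_def using fsumv_zero_map[of s] by (simp add: case_prod_beta')

text \<open>The simplifier eta-contracts \<open>\<lambda>x y. s (f x) y\<close>; these are the previous rules in that form.\<close>

lemma comult_sum_scale_fun:
  assumes "vector_space s"
  shows "comult_sum s (\<lambda>x. s (f x + g x)) a
      = comult_sum s (\<lambda>x. s (f x)) a + comult_sum s (\<lambda>x. s (g x)) a"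
    "comult_sum s (\<lambda>x. s (f x - g x)) a
      = comult_sum s (\<lambda>x. s (f x)) a - comult_sum s (\<lambda>x. s (g x)) a"
    "comult_sum s (\<lambda>x. s (c * f x)) a = s c (comult_sum s (\<lambda>x. s (f x)) a)"
    "comult_sum s (\<lambda>x. s 0) a = 0"
proof -
  interpret V: vector_space s by fact
  have "s (u + v) = (\<lambda>y. s u y + s v y)" "s (u - v) = (\<lambda>y. s u y - s v y)"
    "s (u * v) = (\<lambda>y. s u (s v y))" "s 0 = (\<lambda>y. 0)" for u v
    by (simp_all add: fun_eq_iff V.scale_left_distrib V.scale_left_diff_distrib)
  then show "comult_sum s (\<lambda>x. s (f x + g x)) a
      = comult_sum s (\<lambda>x. s (f x)) a + comult_sum s (\<lambda>x. s (g x)) a"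
    "comult_sum s (\<lambda>x. s (f x - g x)) a
      = comult_sum s (\<lambda>x. s (f x)) a - comult_sum s (\<lambda>x. s (g x)) a"
    "comult_sum s (\<lambda>x. s (c * f x)) a = s c (comult_sum s (\<lambda>x. s (f x)) a)"
    "comult_sum s (\<lambda>x. s 0) a = 0"
    by (simp_all only: comult_sum_add_map[OF assms] comult_sum_diff_map[OF assms]
        comult_sum_scale_map[OF assms] comult_sum_zero_map[OF assms])
qed

lemma klinear_comult_sum: "klinear s s' L
  \<Longrightarrow> L (comult_sum s g a) = comult_sum s' (\<lambda>x y. L (g x y)) a"
  unfolding comult_sum_def by (simp add: klinear_fsumv case_prod_beta')

lemma comult_sum_swap:
  "vector_space s \<Longrightarrow> comult_sum s (\<lambda>x y. comult_sum s (G x y) b) a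
    = comult_sum s (\<lambda>u v. comult_sum s (\<lambda>x y. G x y u v) a) b"
  unfolding comult_sum_def
  using fsumv_swap[of s "\<lambda>p q. G (fst p) (snd p) (fst q) (snd q)" "Delta b" "Delta a"]
  by (simp add: case_prod_beta')

lemma comult_sum_add:
  assumes "vector_space s" "kbilinear sA sA s g"
  shows "comult_sum s g (x + y) = comult_sum s g x + comult_sum s g y"
proof -
  have "comult_sum s g (x + y) = fsumv s (case_prod g) (\<lambda>p. Delta x p + Delta y p)"
    unfolding comult_sum_def
    by (rule teq2_fsumv_eq[OF assms fsupp_Delta _ Delta_add]) (intro fsupp_add fsupp_Delta)
  then show ?thesis unfolding comult_sum_def
    by (simp add: fsumv_add[OF assms(1) fsupp_Delta fsupp_Delta])
qed

lemma comult_sum_scale: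
  assumes "vector_space s" "kbilinear sA sA s g"
  shows "comult_sum s g (sA c x) = s c (comult_sum s g x)"
proof -
  have "comult_sum s g (sA c x) = fsumv s (case_prod g) (\<lambda>p. c * Delta x p)"
    unfolding comult_sum_def
    by (rule teq2_fsumv_eq[OF assms fsupp_Delta _ Delta_scale]) (intro fsupp_mult fsupp_Delta)
  then show ?thesis unfolding comult_sum_def by (simp add: fsumv_scale[OF assms(1) fsupp_Delta])
qed

lemma comult_sum_klinear:
  "vector_space s \<Longrightarrow> kbilinear sA sA s g \<Longrightarrow> klinear sA s (comult_sum s g)"
  unfolding klinear_def by (simp add: comult_sum_add comult_sum_scale)

lemma comult_sum_zero: "vector_space s \<Longrightarrow> kbilinear sA sA s g \<Longrightarrow> comult_sum s g 0 = 0"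
  by (rule klinear_zero[OF comult_sum_klinear])

lemma comult_sum_coassoc:
  assumes vs: "vector_space s" and g: "ktrilinear sA sA sA s g"
  shows "comult_sum s (\<lambda>x y. comult_sum s (\<lambda>p q. g p q y) x) a
    = comult_sum s (\<lambda>x y. comult_sum s (\<lambda>p q. g x p q) y) a"
  using teq3_fsumv_eq[OF vs g fsupp_map_left[OF fsupp_Delta fsupp_Delta]
      fsupp_map_right[OF fsupp_Delta fsupp_Delta] coassoc]
  unfolding fsumv_map_left[OF vs fsupp_Delta fsupp_Delta]
      fsumv_map_right[OF vs fsupp_Delta fsupp_Delta]
    comult_sum_def
  by (simp add: case_prod_beta')

lemma comult_sum_mult:
  assumes vs: "vector_space s" and g: "kbilinear sA sA s g"
  shows "comult_sum s g (x * y)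
    = comult_sum s (\<lambda>x1 x2. comult_sum s (\<lambda>y1 y2. g (x1 * y1) (x2 * y2)) y) x"
  using teq2_fsumv_eq[OF vs g fsupp_Delta fsupp_tmul[OF fsupp_Delta fsupp_Delta] Delta_mult]
  unfolding fsumv_tmul[OF vs fsupp_Delta fsupp_Delta] comult_sum_def
  by (simp add: case_prod_beta')

lemma comult_sum_one:
  assumes vs: "vector_space s" and g: "kbilinear sA sA s g"
  shows "comult_sum s g 1 = g 1 1"
  using teq2_fsumv_eq[OF vs g fsupp_Delta fsupp_delta Delta_one]
  unfolding comult_sum_def by (simp add: fsumv_delta[OF vs])

lemma comult_sum_counit_left:
  assumes "klinear sA s h"
  shows "comult_sum s (\<lambda>x y. s (eps x) (h y)) a = h a"
  using arg_cong[OF counit_left[of a], of h]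
  unfolding klinear_fsumv[OF assms] comult_sum_def
    by (simp add: case_prod_beta' klinearD(2)[OF assms])

lemma comult_sum_counit_right:
  assumes "klinear sA s h"
  shows "comult_sum s (\<lambda>x y. s (eps y) (h x)) a = h a"
  using arg_cong[OF counit_right[of a], of h]
  unfolding klinear_fsumv[OF assms] comult_sum_def
    by (simp add: case_prod_beta' klinearD(2)[OF assms])

lemma comult_sum_antipode_left:
  assumes "klinear sA s h"
  shows "comult_sum s (\<lambda>x y. h (S x * y)) a = s (eps a) (h 1)"
  using arg_cong[OF antipode_left[of a], of h]
  unfolding klinear_fsumv[OF assms] comult_sum_def
    by (simp add: case_prod_beta' klinearD(2)[OF assms])

lemma comult_sum_antipode_right:
  assumes "klinear sA s h"
  shows "comult_sum s (\<lambda>x y. h (x * S y)) a = s (eps a) (h 1)"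
  using arg_cong[OF antipode_right[of a], of h]
  unfolding klinear_fsumv[OF assms] comult_sum_def
    by (simp add: case_prod_beta' klinearD(2)[OF assms])

lemma klinear_mult_right: "klinear sA sA (\<lambda>x. x * y)"
  unfolding klinear_def by (simp add: distrib_right scale_mult_left)

text \<open>The antipode reverses the coproduct (\<open>comult_sum_antipode\<close>).  With
  \<open>L = Delta \<circ> S\<close> and \<open>R = (S \<otimes> S) \<circ> flip \<circ> Delta\<close> in the convolution algebra of maps
  \<open>A \<rightarrow> A \<otimes> A\<close>, this is \<open>L = L * (Delta * R) = (L * Delta) * R = R\<close>: the next lemma is
  \<open>Delta * R = 1\<close>, associativity is \<open>comult_sum_reassoc5\<close>, and \<open>L * Delta = 1\<close> is the
  antipode axiom applied to \<open>Delta (S a\<^sub>1 a\<^sub>2)\<close>.\<close>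

lemma comult_sum_antipode_twice:
  assumes K: "kbilinear sA sA s K"
  shows "comult_sum s (\<lambda>c1 r. comult_sum s (\<lambda>m c4. comult_sum s (\<lambda>c2 c3.
      K (c1 * S c4) (c2 * S c3)) m) r) c = s (eps c) (K 1 1)"
proof -
  note kd = kbilinearD[OF K]
  have K1: "klinear sA s (K x)" and K2: "klinear sA s (\<lambda>x. K x y)" for x y
    using K unfolding kbilinear_def by blast+
  have "comult_sum s (\<lambda>c2 c3. K (c1 * S c4) (c2 * S c3)) m = s (eps m) (K (c1 * S c4) 1)"
    for c1 c4 m
    using comult_sum_antipode_right[OF K1] .
  moreover have "comult_sum s (\<lambda>m c4. s (eps m) (K (c1 * S c4) 1)) r = K (c1 * S r) 1" for c1 r
    by (rule comult_sum_counit_left) (simp add: linearity_simps kd)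
  moreover have "comult_sum s (\<lambda>c1 r. K (c1 * S r) 1) c = s (eps c) (K 1 1)"
    using comult_sum_antipode_right[OF K2] .
  ultimately show ?thesis by simp
qed

lemma comult_sum_reassoc5:
  assumes vs: "vector_space s"
    and W1: "\<And>c1 c2 c3 c4. klinear sA s (\<lambda>a1. W a1 c1 c2 c3 c4)"
    and W2: "\<And>a1 c2 c3 c4. klinear sA s (\<lambda>c1. W a1 c1 c2 c3 c4)"
    and W3: "\<And>a1 c1 c3 c4. klinear sA s (\<lambda>c2. W a1 c1 c2 c3 c4)"
    and W4: "\<And>a1 c1 c2 c4. klinear sA s (\<lambda>c3. W a1 c1 c2 c3 c4)"
    and W5: "\<And>a1 c1 c2 c3. klinear sA s (W a1 c1 c2 c3)"
  shows "comult_sum s (\<lambda>a1 a2. comult_sum s (\<lambda>c1 r. comult_sum s (\<lambda>m c4.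
      comult_sum s (\<lambda>c2 c3. W a1 c1 c2 c3 c4) m) r) a2) a
    = comult_sum s (\<lambda>e t. comult_sum s (\<lambda>a1 b. comult_sum s (\<lambda>c1 c2.
      comult_sum s (\<lambda>c3 c4. W a1 c1 c2 c3 c4) t) b) e) a"
proof -
  have "W (x + y) c1 c2 = (\<lambda>c3 c4. W x c1 c2 c3 c4 + W y c1 c2 c3 c4)"
    "W (sA c x) c1 c2 = (\<lambda>c3 c4. s c (W x c1 c2 c3 c4))"
    "W a1 (x + y) c2 = (\<lambda>c3 c4. W a1 x c2 c3 c4 + W a1 y c2 c3 c4)"
    "W a1 (sA c x) c2 = (\<lambda>c3 c4. s c (W a1 x c2 c3 c4))"
    "W a1 c1 (x + y) = (\<lambda>c3 c4. W a1 c1 x c3 c4 + W a1 c1 y c3 c4)"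
    "W a1 c1 (sA c x) = (\<lambda>c3 c4. s c (W a1 c1 x c3 c4))" for a1 c1 c2 x y c
    by (simp_all add: fun_eq_iff klinearD[OF W1] klinearD[OF W2] klinearD[OF W3])
  note W_simps = this klinearD[OF W1] klinearD[OF W2] klinearD[OF W3] klinearD[OF W4]
    klinearD[OF W5] comult_sum_add[OF vs] comult_sum_scale[OF vs] comult_sum_add_map[OF vs]
    comult_sum_scale_map[OF vs] vector_space_scale_simps[OF vs]
    ktrilinear_def kbilinear_def klinear_def
  have "comult_sum s (\<lambda>m c4. comult_sum s (\<lambda>c2 c3. W a1 c1 c2 c3 c4) m) r
      = comult_sum s (\<lambda>c2 t. comult_sum s (\<lambda>c3 c4. W a1 c1 c2 c3 c4) t) r" for a1 c1 r
    by (rule comult_sum_coassoc[OF vs]) (simp add: W_simps)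
  moreover have "comult_sum s (\<lambda>c1 r. comult_sum s (\<lambda>c2 t.
        comult_sum s (\<lambda>c3 c4. W a1 c1 c2 c3 c4) t) r) a2
      = comult_sum s (\<lambda>b t. comult_sum s (\<lambda>c1 c2.
        comult_sum s (\<lambda>c3 c4. W a1 c1 c2 c3 c4) t) b) a2" for a1 a2
    by (rule comult_sum_coassoc[OF vs, symmetric]) (simp add: W_simps)
  moreover have "comult_sum s (\<lambda>a1 a2. comult_sum s (\<lambda>b t. comult_sum s (\<lambda>c1 c2.
        comult_sum s (\<lambda>c3 c4. W a1 c1 c2 c3 c4) t) b) a2) a
      = comult_sum s (\<lambda>e t. comult_sum s (\<lambda>a1 b. comult_sum s (\<lambda>c1 c2.
        comult_sum s (\<lambda>c3 c4. W a1 c1 c2 c3 c4) t) b) e) a"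
    by (rule comult_sum_coassoc[OF vs, symmetric]) (simp add: W_simps)
  ultimately show ?thesis by simp
qed

lemma comult_sum_antipode_expand:
  assumes vs: "vector_space s" and G: "kbilinear sA sA s G"
  shows "comult_sum s G (S a) = comult_sum s (\<lambda>e t. comult_sum s (\<lambda>a1 b. comult_sum s
    (\<lambda>x y. comult_sum s (\<lambda>c3 c4. G (x * S c4) (y * S c3)) t) (S a1 * b)) e) a"
proof -
  note gd = kbilinearD[OF G] and vs_simps = vector_space_scale_simps[OF vs]
  note sum_simps = comult_sum_add[OF vs] comult_sum_scale[OF vs] comult_sum_add_map[OF vs]
    comult_sum_scale_map[OF vs] vs_simps gd S_simps distrib_left distrib_right scale_mult_left
    scale_mult_right kbilinear_def klinear_def
  define W where "W a1 c1 c2 c3 c4 =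
    comult_sum s (\<lambda>u v. G (u * (c1 * S c4)) (v * (c2 * S c3))) (S a1)" for a1 c1 c2 c3 c4
  define H where "H t x y = comult_sum s (\<lambda>c3 c4. G (x * S c4) (y * S c3)) t" for t x y
  have bH: "kbilinear sA sA s (H t)" for t
    unfolding H_def by (simp add: sum_simps)
  have "comult_sum s G (S a) = comult_sum s (\<lambda>a1 a2. s (eps a2) (comult_sum s G (S a1))) a"
    by (rule comult_sum_counit_right[symmetric]) (simp add: sum_simps G)
  also have "\<dots> = comult_sum s (\<lambda>a1 a2. comult_sum s (\<lambda>c1 r. comult_sum s (\<lambda>m c4.
      comult_sum s (\<lambda>c2 c3. W a1 c1 c2 c3 c4) m) r) a2) a"
  proof -
    have "kbilinear sA sA s (\<lambda>q1 q2. comult_sum s (\<lambda>u v. G (u * q1) (v * q2)) (S a1))" for a1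
      by (simp add: sum_simps)
    from comult_sum_antipode_twice[OF this] show ?thesis unfolding W_def by simp
  qed
  also have "\<dots> = comult_sum s (\<lambda>e t. comult_sum s (\<lambda>a1 b. comult_sum s (\<lambda>c1 c2.
      comult_sum s (\<lambda>c3 c4. W a1 c1 c2 c3 c4) t) b) e) a"
    by (rule comult_sum_reassoc5[OF vs]) (simp_all add: W_def sum_simps)
  also have "\<dots> = comult_sum s (\<lambda>e t. comult_sum s (\<lambda>a1 b. comult_sum s (H t) (S a1 * b)) e) a"
  proof -
    have "comult_sum s (\<lambda>c1 c2. comult_sum s (\<lambda>c3 c4. W a1 c1 c2 c3 c4) t) b
        = comult_sum s (\<lambda>c1 c2. comult_sum s (\<lambda>u v. comult_sum s
            (\<lambda>c3 c4. G (u * c1 * S c4) (v * c2 * S c3)) t) (S a1)) b" for a1 b t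
      unfolding W_def by (simp add: mult.assoc comult_sum_swap[OF vs, of _ t])
    also have "\<dots> a1 b t = comult_sum s (H t) (S a1 * b)" for a1 b t
      unfolding comult_sum_mult[OF vs bH] H_def by (rule comult_sum_swap[OF vs])
    finally show ?thesis by simp
  qed
  finally show ?thesis unfolding H_def .
qed

lemma comult_sum_antipode:
  assumes vs: "vector_space s" and G: "kbilinear sA sA s G"
  shows "comult_sum s G (S a) = comult_sum s (\<lambda>p q. G (S q) (S p)) a"
proof -
  let ?H = "\<lambda>t x y. comult_sum s (\<lambda>c3 c4. G (x * S c4) (y * S c3)) t"
  have bH: "kbilinear sA sA s (?H t)" for t
    by (simp add: linearity_simps kbilinearD[OF G] vector_space_scale_simps[OF vs]
        comult_sum_add_map[OF vs] comult_sum_scale_map[OF vs])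
  have "comult_sum s (\<lambda>a1 b. comult_sum s (?H t) (S a1 * b)) e
      = s (eps e) (comult_sum s (\<lambda>c3 c4. G (S c4) (S c3)) t)" for e t
    using comult_sum_antipode_left[OF comult_sum_klinear[OF vs bH]] comult_sum_one[OF vs bH] by simp
  then have "comult_sum s G (S a)
      = comult_sum s (\<lambda>e t. s (eps e) (comult_sum s (\<lambda>c3 c4. G (S c4) (S c3)) t)) a"
    by (simp add: comult_sum_antipode_expand[OF vs G])
  also have "\<dots> = comult_sum s (\<lambda>p q. G (S q) (S p)) a"
    by (rule comult_sum_counit_left)
      (simp add: linearity_simps comult_sum_add[OF vs] comult_sum_scale[OF vs] kbilinearD[OF G]
        vector_space_scale_simps[OF vs] comult_sum_add_map[OF vs] comult_sum_scale_map[OF vs])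
  finally show ?thesis .
qed

end

section \<open>The Haar measure is invariant on both sides\<close>

locale hopf_haar = hopf sA Delta eps S
  for sA :: "'k::field \<Rightarrow> 'a::ring_1 \<Rightarrow> 'a" and Delta eps S +
  fixes J :: "'a \<Rightarrow> 'k"
  assumes klinear_J: "klinear sA (*) J"
    and haar_J: "\<And>a. fsumv sA (\<lambda>(x, y). sA (J y) x) (Delta a) = sA (J a) 1"
    and J_one: "J 1 = 1"
begin

lemmas J_simps = klinearD[OF klinear_J] klinear_zero[OF klinear_J]
lemmas haar_linearity_simps = linearity_simps J_simps mult.left_commute
  comult_sum_scale_fun[OF vector_space_A] comult_sum_zero[OF vector_space_A]

lemma comult_sum_haar:
  assumes "klinear sA s g"
  shows "comult_sum s (\<lambda>x y. s (J y) (g x)) a = s (J a) (g 1)"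
  using arg_cong[OF haar_J[of a], of g]
  unfolding klinear_fsumv[OF assms] comult_sum_def
    by (simp add: case_prod_beta' klinearD(2)[OF assms])

lemma klinear_scale_left: "klinear (*) sA (\<lambda>c. sA c y)"
  by (simp add: klinear_def scale_A_simps)

lemma klinear_scale_right: "klinear sA sA (\<lambda>y. sA c y)"
  by (simp add: klinear_def scale_A_simps mult.commute)

lemma scale_comult_sum: "sA (comult_sum (*) G x) = (\<lambda>y. comult_sum sA (\<lambda>p q. sA (G p q) y) x)"
  by (rule ext) (rule klinear_comult_sum[OF klinear_scale_left])

definition hit :: "('a \<Rightarrow> 'k) \<Rightarrow> 'a \<Rightarrow> 'a" where
  "hit h a = comult_sum sA (\<lambda>x y. sA (h x) y) a"

definition conv :: "('a \<Rightarrow> 'k) \<Rightarrow> ('a \<Rightarrow> 'k) \<Rightarrow> 'a \<Rightarrow> 'k" where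
  "conv h h' a = comult_sum (*) (\<lambda>x y. h x * h' y) a"

abbreviation avg :: "'a \<Rightarrow> 'a" where
  "avg \<equiv> hit J"

lemma klinear_hit:
  assumes "klinear sA (*) h"
  shows "klinear sA sA (hit h)"
  unfolding hit_def
  by (rule comult_sum_klinear[OF vector_space_A])
    (simp add: kbilinear_def klinear_def klinearD[OF assms] scale_A_simps mult.commute)

lemmas avg_simps = klinearD[OF klinear_hit[OF klinear_J]] klinear_zero[OF klinear_hit[OF klinear_J]]
  klinear_diff[OF klinear_hit[OF klinear_J]]

lemma hit_zero: "hit (\<lambda>x. 0) a = 0"
  unfolding hit_def by (simp add: haar_linearity_simps)

lemma eps_hit: "klinear sA (*) g \<Longrightarrow> eps (hit g a) = g a"
  unfolding hit_def
  using comult_sum_counit_right[of "(*)" g a]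
  by (simp add: klinear_comult_sum[OF klinear_eps] eps_simps mult.commute)

lemma klinear_conv:
  assumes h: "klinear sA (*) h" and h': "klinear sA (*) h'"
  shows "klinear sA (*) (conv h h')"
  unfolding conv_def fun_eq_iff[symmetric]
  by (rule comult_sum_klinear[OF vector_space_mult])
    (simp add: kbilinear_def klinear_def klinearD[OF h] klinearD[OF h'] algebra_simps)

lemma conv_haar_right: "klinear sA (*) h \<Longrightarrow> conv h J a = h 1 * J a"
  unfolding conv_def using comult_sum_haar[of "(*)" h a] by (simp add: mult.commute)

lemma hit_hit:
  assumes h: "klinear sA (*) h" and h': "klinear sA (*) h'"
  shows "hit h' (hit h a) = hit (conv h h') a"
proof -
  have "hit h' (hit h a) = comult_sum sA (\<lambda>x y. sA (h x) (hit h' y)) a"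
    unfolding hit_def[of h]
    by (simp add: klinear_comult_sum[OF klinear_hit[OF h']] klinearD(2)[OF klinear_hit[OF h']])
  also have "\<dots> = comult_sum sA (\<lambda>x y. comult_sum sA (\<lambda>p q. sA (h x) (sA (h' p) q)) y) a"
    unfolding hit_def by (simp add: comult_sum_scale_map[OF vector_space_A])
  also have "\<dots> = comult_sum sA (\<lambda>x y. comult_sum sA (\<lambda>p q. sA (h p) (sA (h' q) y)) x) a"
    by (rule comult_sum_coassoc[OF vector_space_A, symmetric])
      (simp add: haar_linearity_simps klinearD[OF h] klinearD[OF h'])
  also have "\<dots> = hit (conv h h') a"
    unfolding hit_def conv_def by (simp add: scale_comult_sum scale_A_simps)
  finally show ?thesis .
qed

lemma avg_avg: "avg (avg y) = avg y"
proof -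
  have "conv J J = J" using conv_haar_right[OF klinear_J] by (simp add: J_one fun_eq_iff)
  then show ?thesis using hit_hit[OF klinear_J klinear_J, of y] by simp
qed

lemma comult_sum_avg:
  assumes vs: "vector_space s" and B: "kbilinear sA sA s B"
  shows "comult_sum s (\<lambda>x y. B x (avg y)) n = B 1 (avg n)"
proof -
  note bd = kbilinearD[OF B]
  have B1: "klinear sA s (B x)" and B2: "klinear sA s (\<lambda>x. B x y)" for x y
    using B unfolding kbilinear_def by blast+
  have "comult_sum s (\<lambda>x y. B x (avg y)) n
      = comult_sum s (\<lambda>x y. comult_sum s (\<lambda>p q. B x (sA (J p) q)) y) n"
    unfolding hit_def by (simp add: klinear_comult_sum[OF B1])
  also have "\<dots> = comult_sum s (\<lambda>x y. comult_sum s (\<lambda>p q. B p (sA (J q) y)) x) n"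
    by (rule comult_sum_coassoc[OF vs, symmetric])
      (simp add: ktrilinear_def klinear_def bd scale_A_simps J_simps vector_space_scale_simps[OF vs]
        mult.commute)
  also have "\<dots> = comult_sum s (\<lambda>x y. s (J x) (B 1 y)) n"
    using comult_sum_haar[OF B2] by (simp add: bd)
  also have "\<dots> = B 1 (avg n)"
    unfolding hit_def by (simp add: klinear_comult_sum[OF B1] bd)
  finally show ?thesis .
qed

lemma haar_antipode_exchange:
  "comult_sum sA (\<lambda>p q. sA (J (q * S y)) p) x = comult_sum sA (\<lambda>p q. sA (J (x * S p)) q) y"
proof -
  note vs = vector_space_A
  have haar_mult: "sA (J w) q = comult_sum sA (\<lambda>u v. sA (J v) (u * q)) w" for w q
    using comult_sum_haar[OF klinear_mult_right, of q w] by simp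
  have b_haar: "kbilinear sA sA sA (\<lambda>u v. sA (J v) (u * q))" for q
    by (simp add: haar_linearity_simps)
  have expand: "comult_sum sA (\<lambda>u v. sA (J v) (u * q)) (x * S p)
      = comult_sum sA (\<lambda>x1 x2. comult_sum sA (\<lambda>p1 p2. sA (J (x2 * S p1)) (x1 * S p2 * q)) p) x"
    for p q
    by (simp add: comult_sum_mult[OF vs b_haar] comult_sum_antipode[OF vs] haar_linearity_simps)
  have collapse:
    "comult_sum sA (\<lambda>p q. comult_sum sA (\<lambda>p1 p2. sA (J (x2 * S p1)) (x1 * S p2 * q)) p) y
      = sA (J (x2 * S y)) x1" for x1 x2
  proof -
    have "comult_sum sA (\<lambda>p q. comult_sum sA (\<lambda>p1 p2. sA (J (x2 * S p1)) (x1 * S p2 * q)) p) y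
        = comult_sum sA (\<lambda>p1 r. comult_sum sA (\<lambda>p2 q. sA (J (x2 * S p1)) (x1 * S p2 * q)) r) y"
      by (rule comult_sum_coassoc[OF vs]) (simp add: haar_linearity_simps)
    also have "\<dots> = comult_sum sA (\<lambda>p1 r. sA (eps r) (sA (J (x2 * S p1)) x1)) y"
    proof -
      have "comult_sum sA (\<lambda>p2 q. sA c (x1 * (S p2 * q))) r = sA (eps r) (sA c (x1 * 1))" for c r
        by (rule comult_sum_antipode_left) (simp add: linearity_simps)
      then show ?thesis by (simp add: mult.assoc)
    qed
    also have "\<dots> = sA (J (x2 * S y)) x1"
      by (rule comult_sum_counit_right) (simp add: haar_linearity_simps)
    finally show ?thesis .
  qed
  have "comult_sum sA (\<lambda>p q. sA (J (x * S p)) q) y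
      = comult_sum sA (\<lambda>p q. comult_sum sA (\<lambda>x1 x2.
          comult_sum sA (\<lambda>p1 p2. sA (J (x2 * S p1)) (x1 * S p2 * q)) p) x) y"
    by (simp only: haar_mult[of "x * S _"] expand)
  also have "\<dots> = comult_sum sA (\<lambda>x1 x2. comult_sum sA (\<lambda>p q.
      comult_sum sA (\<lambda>p1 p2. sA (J (x2 * S p1)) (x1 * S p2 * q)) p) y) x"
    by (rule comult_sum_swap[OF vs])
  also have "\<dots> = comult_sum sA (\<lambda>p q. sA (J (q * S y)) p) x"
    by (simp add: collapse)
  finally show ?thesis by simp
qed

definition twist :: "'a \<Rightarrow> 'a \<Rightarrow> 'a" where
  "twist x m = comult_sum sA (\<lambda>u v. sA (J (x * S u)) v) m"

text \<open>Maschke averaging of the linear projection \<open>m \<mapsto> m - avg m\<close> onto the kernel of \<open>avg\<close>;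
  the averaging with \<open>J\<close> and \<open>S\<close> makes it commute with every \<open>hit g\<close>.\<close>

definition maschke_proj :: "'a \<Rightarrow> 'a" where
  "maschke_proj a = comult_sum sA (\<lambda>x y. twist x (y - avg y)) a"

lemma kbilinear_twist: "kbilinear sA sA sA twist"
  unfolding twist_def
  by (simp add: haar_linearity_simps comult_sum_add[OF vector_space_A]
      comult_sum_scale[OF vector_space_A]
      comult_sum_add_map[OF vector_space_A] comult_sum_scale_map[OF vector_space_A])

lemma twist_diff: "twist x (m - m') = twist x m - twist x m'"
  using kbilinear_twist unfolding kbilinear_def by (blast intro: klinear_diff)

lemma kbilinear_maschke_summand: "kbilinear sA sA sA (\<lambda>x y. twist x (y - avg y))"
  by (simp add: kbilinear_def klinear_def twist_diff kbilinearD[OF kbilinear_twist] avg_simps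
      scale_A_simps)

lemma klinear_maschke_proj: "klinear sA sA maschke_proj"
  unfolding maschke_proj_def fun_eq_iff[symmetric]
  by (rule comult_sum_klinear[OF vector_space_A kbilinear_maschke_summand])

lemma avg_maschke_proj: "avg (maschke_proj a) = 0"
proof -
  have avg_twist: "avg (twist x m) = sA (J (x * S 1)) (avg m)" for x m
  proof -
    have "avg (twist x m) = comult_sum sA (\<lambda>u v. sA (J (x * S u)) (avg v)) m"
      unfolding twist_def by (simp add: klinear_comult_sum[OF klinear_hit[OF klinear_J]] avg_simps)
    also have "\<dots> = sA (J (x * S 1)) (avg m)"
      by (rule comult_sum_avg[OF vector_space_A]) (simp add: haar_linearity_simps)
    finally show ?thesis .
  qed
  have "avg (maschke_proj a) = comult_sum sA (\<lambda>x y. avg (twist x (y - avg y))) a"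
    unfolding maschke_proj_def by (simp add: klinear_comult_sum[OF klinear_hit[OF klinear_J]])
  also have "\<dots> = comult_sum sA (\<lambda>x y. 0) a"
    by (simp add: avg_twist avg_simps avg_avg scale_A_simps)
  finally show ?thesis by (simp add: comult_sum_zero_map[OF vector_space_A])
qed

lemma maschke_proj_fix:
  assumes "avg u = 0"
  shows "maschke_proj u = u"
proof -
  have "comult_sum sA (\<lambda>x y. twist x (avg y)) u = 0"
    using comult_sum_avg[OF vector_space_A kbilinear_twist, of u] assms
    by (simp add: twist_def haar_linearity_simps)
  moreover have "comult_sum sA twist u = u"
  proof -
    have "comult_sum sA twist u
        = comult_sum sA (\<lambda>x v. comult_sum sA (\<lambda>p s. sA (J (p * S s)) v) x) u"
      unfolding twist_def
      by (rule comult_sum_coassoc[OF vector_space_A, symmetric]) (simp add: haar_linearity_simps)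
    also have "\<dots> = comult_sum sA (\<lambda>x v. sA (eps x) v) u"
    proof -
      have "comult_sum sA (\<lambda>p s. sA (J (p * S s)) v) x = sA (eps x) (sA (J 1) v)" for x v
        by (rule comult_sum_antipode_right) (simp add: haar_linearity_simps)
      then show ?thesis by (simp add: J_one scale_A_simps)
    qed
    also have "\<dots> = u" by (rule comult_sum_counit_left[OF klinear_id])
    finally show ?thesis .
  qed
  ultimately show ?thesis
    unfolding maschke_proj_def
    by (simp add: twist_diff comult_sum_diff_map[OF vector_space_A])
qed

lemma comult_sum_twist_hit:
  assumes g: "klinear sA (*) g"
  shows "comult_sum sA (\<lambda>p q. sA (g p) (twist q n)) x = hit g (twist x n)"
proof -
  have exchange: "comult_sum sA (\<lambda>p q. sA (g p) (sA (J (q * S u)) v)) x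
      = comult_sum sA (\<lambda>p q. sA (J (x * S p) * g q) v) u" for u v
  proof -
    have "g (comult_sum sA (\<lambda>p q. sA (J (q * S u)) p) x)
        = g (comult_sum sA (\<lambda>p q. sA (J (x * S p)) q) u)"
      by (simp add: haar_antipode_exchange)
    then have "comult_sum (*) (\<lambda>p q. g p * J (q * S u)) x
        = comult_sum (*) (\<lambda>p q. J (x * S p) * g q) u"
      by (simp add: klinear_comult_sum[OF g] klinearD(2)[OF g] mult.commute)
    then show ?thesis
      by (simp add: klinear_comult_sum[OF klinear_scale_left, symmetric] scale_A_simps)
  qed
  have "comult_sum sA (\<lambda>p q. sA (g p) (twist q n)) x
      = comult_sum sA (\<lambda>u v. comult_sum sA (\<lambda>p q. sA (g p) (sA (J (q * S u)) v)) x) n"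
    unfolding twist_def
    by (simp add: comult_sum_scale_map[OF vector_space_A] comult_sum_swap[OF vector_space_A])
  also have "\<dots> = comult_sum sA (\<lambda>u v. comult_sum sA (\<lambda>p q. sA (J (x * S p) * g q) v) u) n"
    by (simp add: exchange)
  also have "\<dots> = comult_sum sA (\<lambda>u v. comult_sum sA (\<lambda>p q. sA (J (x * S u) * g p) q) v) n"
    by (rule comult_sum_coassoc[OF vector_space_A]) (simp add: haar_linearity_simps klinearD[OF g])
  also have "\<dots> = comult_sum sA (\<lambda>u v. sA (J (x * S u)) (hit g v)) n"
  proof -
    have "comult_sum sA (\<lambda>p. sA (c * g p)) = (\<lambda>v. sA c (hit g v))" for c
      unfolding hit_def by (simp add: fun_eq_iff comult_sum_scale_fun[OF vector_space_A])
    then show ?thesis by (simp only:)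
  qed
  also have "\<dots> = hit g (twist x n)"
    unfolding twist_def
    by (simp add: klinear_comult_sum[OF klinear_hit[OF g]] klinearD(2)[OF klinear_hit[OF g]])
  finally show ?thesis .
qed

lemma maschke_proj_hit:
  assumes g: "klinear sA (*) g"
  shows "maschke_proj (hit g a) = hit g (maschke_proj a)"
proof -
  have "maschke_proj (hit g a) = comult_sum sA (\<lambda>x y. sA (g x) (maschke_proj y)) a"
    unfolding hit_def[of g a]
    by (simp add: klinear_comult_sum[OF klinear_maschke_proj] klinearD(2)[OF klinear_maschke_proj])
  also have "\<dots> = comult_sum sA (\<lambda>x y. comult_sum sA (\<lambda>p q. sA (g x) (twist p (q - avg q))) y) a"
    unfolding maschke_proj_def by (simp add: comult_sum_scale_map[OF vector_space_A])
  also have "\<dots> = comult_sum sA (\<lambda>x y. comult_sum sA (\<lambda>p q. sA (g p) (twist q (y - avg y))) x) a"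
    by (rule comult_sum_coassoc[OF vector_space_A, symmetric])
      (simp add: haar_linearity_simps klinearD[OF g] kbilinearD[OF kbilinear_maschke_summand])
  also have "\<dots> = comult_sum sA (\<lambda>x y. hit g (twist x (y - avg y))) a"
    by (simp add: comult_sum_twist_hit[OF g])
  also have "\<dots> = hit g (maschke_proj a)"
    unfolding maschke_proj_def by (simp add: klinear_comult_sum[OF klinear_hit[OF g]])
  finally show ?thesis .
qed

lemma conv_haar_left_eq_0:
  assumes h: "klinear sA (*) h" and h1: "h 1 = 0"
  shows "conv J h a = 0"
proof -
  define g where "g = conv J h"
  have g: "klinear sA (*) g" unfolding g_def by (rule klinear_conv[OF klinear_J h])
  have "g 1 = 0"
    using comult_sum_one[OF vector_space_mult, of "\<lambda>x y. J x * h y"] h1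
    unfolding g_def conv_def
      by (simp add: kbilinear_def klinear_def J_simps klinearD[OF h] algebra_simps)
  then have "conv g J = (\<lambda>x. 0)" using conv_haar_right[OF g] by (simp add: fun_eq_iff)
  then have "avg (hit g b) = 0" for b
    using hit_hit[OF g klinear_J, of b] by (simp add: hit_zero)
  then have "hit g a = hit g (maschke_proj a)"
    using maschke_proj_fix maschke_proj_hit[OF g] by metis
  also have "\<dots> = hit h (avg (maschke_proj a))"
    unfolding g_def by (rule hit_hit[OF klinear_J h, symmetric])
  also have "\<dots> = 0"
    by (simp add: avg_maschke_proj klinear_zero[OF klinear_hit[OF h]])
  finally have "hit g a = 0" .
  then show ?thesis using eps_hit[OF g, of a] by (simp add: eps_simps g_def)
qed

lemma conv_haar_left: "klinear sA (*) h \<Longrightarrow> conv J h a = J a * h 1"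
proof -
  assume h: "klinear sA (*) h"
  define h' where "h' x = h x - h 1 * eps x" for x
  have h': "klinear sA (*) h'"
    unfolding h'_def klinear_def by (simp add: klinearD[OF h] eps_simps algebra_simps)
  have "conv J h' a = 0" by (rule conv_haar_left_eq_0[OF h']) (simp add: h'_def eps_one)
  moreover have "conv J h' a = conv J h a - h 1 * conv J eps a"
    unfolding conv_def h'_def
    by (simp add: algebra_simps comult_sum_diff_map[OF vector_space_mult]
        comult_sum_scale_map[OF vector_space_mult, symmetric])
  moreover have "conv J eps a = J a"
    unfolding conv_def using comult_sum_counit_right[OF klinear_J, of a] by (simp add: mult.commute)
  ultimately show ?thesis by (simp add: mult.commute)
qed

theorem avg_eq: "avg a = sA (J a) 1"
proof (rule eq_if_functionals_eq[OF vector_space_A])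
  fix f :: "'a \<Rightarrow> 'k" assume f: "klinear sA (*) f"
  have "f (avg a) = conv J f a"
    unfolding hit_def conv_def by (simp add: klinear_comult_sum[OF f] klinearD(2)[OF f])
  also have "\<dots> = f (sA (J a) 1)" by (simp add: conv_haar_left[OF f] klinearD(2)[OF f])
  finally show "f (avg a) = f (sA (J a) 1)" .
qed

end

section \<open>Haar measures on Galois extensions\<close>

locale haar_galois = hopf_haar sA Delta eps S J
  for sA :: "'k::field \<Rightarrow> 'a::ring_1 \<Rightarrow> 'a" and Delta eps S J +
  fixes sZ :: "'k \<Rightarrow> 'z::ring_1 \<Rightarrow> 'z" and alpha :: "'z \<Rightarrow> ('a \<times> 'z \<Rightarrow> 'k)"
  assumes vector_space_Z: "vector_space sZ"
    and scale_mult_Z: "\<And>c x y. sZ c x * y = sZ c (x * y)"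
    and fsupp_alpha: "\<And>z. fsupp (alpha z)"
    and alpha_add: "\<And>x y. teq2 sA sZ (alpha (x + y)) (\<lambda>p. alpha x p + alpha y p)"
    and alpha_scale: "\<And>c x. teq2 sA sZ (alpha (sZ c x)) (\<lambda>p. c * alpha x p)"
    and coassoc_alpha: "\<And>z. teq3 sA sA sZ (map_left Delta (alpha z)) (map_right alpha (alpha z))"
    and alpha_one: "teq2 sA sZ (alpha 1) (delta (1, 1))"
    and galois_map_inj: "\<And>F G. fsupp F \<Longrightarrow> fsupp G \<Longrightarrow>
      teq2 sA sZ (galois_map alpha F) (galois_map alpha G) \<Longrightarrow> teq2 sZ sZ F G"
begin

lemmas scale_Z_simps = vector_space_scale_simps[OF vector_space_Z]

definition coact_sum :: "('k \<Rightarrow> 'v::ab_group_add \<Rightarrow> 'v) \<Rightarrow> ('a \<Rightarrow> 'z \<Rightarrow> 'v) \<Rightarrow> 'z \<Rightarrow> 'v" where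
  "coact_sum s g z = fsumv s (case_prod g) (alpha z)"

lemma klinear_coact_sum: "klinear s s' L \<Longrightarrow> L (coact_sum s g z) = coact_sum s' (\<lambda>x y. L (g x y)) z"
  unfolding coact_sum_def by (simp add: klinear_fsumv case_prod_beta')

lemma coact_sum_scale_map: "vector_space s
  \<Longrightarrow> coact_sum s (\<lambda>x y. s c (g x y)) z = s c (coact_sum s g z)"
  unfolding coact_sum_def using fsumv_scale_map[of s c "case_prod g"] by (simp add: case_prod_beta')

lemma coact_sum_add:
  assumes "vector_space s" "kbilinear sA sZ s g"
  shows "coact_sum s g (x + y) = coact_sum s g x + coact_sum s g y"
proof -
  have "coact_sum s g (x + y) = fsumv s (case_prod g) (\<lambda>p. alpha x p + alpha y p)"
    unfolding coact_sum_def
    by (rule teq2_fsumv_eq[OF assms fsupp_alpha _ alpha_add]) (intro fsupp_add fsupp_alpha)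
  then show ?thesis unfolding coact_sum_def
    by (simp add: fsumv_add[OF assms(1) fsupp_alpha fsupp_alpha])
qed

lemma coact_sum_scale:
  assumes "vector_space s" "kbilinear sA sZ s g"
  shows "coact_sum s g (sZ c x) = s c (coact_sum s g x)"
proof -
  have "coact_sum s g (sZ c x) = fsumv s (case_prod g) (\<lambda>p. c * alpha x p)"
    unfolding coact_sum_def
    by (rule teq2_fsumv_eq[OF assms fsupp_alpha _ alpha_scale]) (intro fsupp_mult fsupp_alpha)
  then show ?thesis unfolding coact_sum_def by (simp add: fsumv_scale[OF assms(1) fsupp_alpha])
qed

lemma coact_sum_klinear: "vector_space s \<Longrightarrow> kbilinear sA sZ s g \<Longrightarrow> klinear sZ s (coact_sum s g)"
  unfolding klinear_def by (simp add: coact_sum_add coact_sum_scale)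

lemma coact_sum_coassoc:
  assumes vs: "vector_space s" and g: "ktrilinear sA sA sZ s g"
  shows "coact_sum s (\<lambda>x w. comult_sum s (\<lambda>p q. g p q w) x) z
    = coact_sum s (\<lambda>x w. coact_sum s (\<lambda>p q. g x p q) w) z"
  using teq3_fsumv_eq[OF vs g fsupp_map_left[OF fsupp_alpha fsupp_Delta]
      fsupp_map_right[OF fsupp_alpha fsupp_alpha] coassoc_alpha]
  unfolding fsumv_map_left[OF vs fsupp_alpha fsupp_Delta]
      fsumv_map_right[OF vs fsupp_alpha fsupp_alpha]
    comult_sum_def coact_sum_def
  by (simp add: case_prod_beta')

lemma coact_sum_one:
  assumes vs: "vector_space s" and g: "kbilinear sA sZ s g"
  shows "coact_sum s g 1 = g 1 1"
  using teq2_fsumv_eq[OF vs g fsupp_alpha fsupp_delta alpha_one]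
  unfolding coact_sum_def by (simp add: fsumv_delta[OF vs])

definition coinv_avg :: "'z \<Rightarrow> 'z" where
  "coinv_avg z = coact_sum sZ (\<lambda>a w. sZ (J a) w) z"

lemma klinear_coinv_avg: "klinear sZ sZ coinv_avg"
  unfolding coinv_avg_def fun_eq_iff[symmetric]
  by (rule coact_sum_klinear[OF vector_space_Z])
    (simp add: kbilinear_def klinear_def J_simps scale_Z_simps mult.commute)

lemma coact_sum_coinv_avg:
  assumes B: "kbilinear sA sZ (*) B"
  shows "coact_sum (*) B (coinv_avg z) = B 1 (coinv_avg z)"
proof -
  note bd = kbilinearD[OF B]
  have B1: "klinear sZ (*) (B x)" and B2: "klinear sA (*) (\<lambda>x. B x y)" for x y
    using B unfolding kbilinear_def by blast+
  have "coact_sum (*) B (coinv_avg z) = coact_sum (*) (\<lambda>a w. coact_sum (*) B (sZ (J a) w)) z"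
    unfolding coinv_avg_def
      by (simp add: klinear_coact_sum[OF coact_sum_klinear[OF vector_space_mult B]])
  also have "\<dots> = coact_sum (*) (\<lambda>a w. coact_sum (*) (\<lambda>b w'. J a * B b w') w) z"
    by (simp add: coact_sum_scale[OF vector_space_mult B] coact_sum_scale_map[OF vector_space_mult])
  also have "\<dots> = coact_sum (*) (\<lambda>x w. comult_sum (*) (\<lambda>p q. J p * B q w) x) z"
    by (rule coact_sum_coassoc[OF vector_space_mult, symmetric])
      (simp add: ktrilinear_def klinear_def bd J_simps algebra_simps)
  also have "\<dots> = coact_sum (*) (\<lambda>x w. J x * B 1 w) z"
  proof -
    have "comult_sum (*) (\<lambda>p q. J p * B q w) x = B (avg x) w" for x w
      unfolding hit_def by (simp add: klinear_comult_sum[OF B2] bd)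
    then show ?thesis by (simp add: avg_eq bd)
  qed
  also have "\<dots> = B 1 (coinv_avg z)"
    unfolding coinv_avg_def by (simp add: klinear_coact_sum[OF B1] bd)
  finally show ?thesis .
qed

lemma coinv_avg_eq_scalar:
  assumes f: "klinear sZ (*) f" "f 1 = 1"
  shows "coinv_avg z = sZ (f (coinv_avg z)) 1"
proof -
  let ?w = "coinv_avg z"
  have galois_delta: "galois_map alpha (delta (x, y)) = tmul (alpha x) (delta (1, y))" for x y
    unfolding galois_map_def fext_delta by simp
  have "teq2 sA sZ (galois_map alpha (delta (?w, 1))) (galois_map alpha (delta (1, ?w)))"
    unfolding galois_delta
  proof (rule vector_space_pair.teq2_if_bilinear_forms_eq)
    show "vector_space_pair sA sZ"
      by (intro vector_space_pair.intro vector_space_A vector_space_Z)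
    fix B :: "'a \<Rightarrow> 'z \<Rightarrow> 'k" assume B: "kbilinear sA sZ (*) B"
    have "fsumv (*) (case_prod B) (tmul (alpha ?w) (delta (1, 1))) = coact_sum (*) B ?w"
      unfolding fsumv_tmul_delta[OF fsupp_alpha] coact_sum_def by (simp add: case_prod_beta')
    also have "\<dots> = B 1 ?w" by (rule coact_sum_coinv_avg[OF B])
    also have "\<dots> = coact_sum (*) (\<lambda>a w. B a (w * ?w)) 1"
      by (subst coact_sum_one[OF vector_space_mult])
        (simp_all add: kbilinear_def klinear_def kbilinearD[OF B] scale_mult_Z distrib_right)
    also have "\<dots> = fsumv (*) (case_prod B) (tmul (alpha 1) (delta (1, ?w)))"
      unfolding fsumv_tmul_delta[OF fsupp_alpha] coact_sum_def by (simp add: case_prod_beta')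
    finally show "fsumv (*) (case_prod B) (tmul (alpha ?w) (delta (1, 1)))
      = fsumv (*) (case_prod B) (tmul (alpha 1) (delta (1, ?w)))" .
  qed (intro fsupp_tmul fsupp_alpha fsupp_delta)+
  then have "teq2 sZ sZ (delta (?w, 1)) (delta (1, ?w))"
    by (rule galois_map_inj[OF fsupp_delta fsupp_delta])
  from teq2_fsumv_eq[OF vector_space_Z _ fsupp_delta fsupp_delta this, of "\<lambda>x y. sZ (f x) y"]
  show ?thesis
    by (simp add: fsumv_delta[OF vector_space_Z] f(2) scale_Z_simps kbilinear_def klinear_def
        klinearD[OF f(1)] mult.commute)
qed

lemma haar_measure_eq_coinv_avg:
  assumes f: "klinear sZ (*) f" "f 1 = 1" and mu: "haar_measure sA sZ alpha mu"
  shows "mu z = f (coinv_avg z)"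
proof -
  have mu_lin: "klinear sZ (*) mu" and mu_one: "mu 1 = 1"
    using mu unfolding haar_measure_def by (blast intro: linear_imp_klinear)+
  have mu_haar: "coact_sum sA (\<lambda>a w. sA (mu w) a) z = sA (mu z) 1"
    using mu unfolding haar_measure_def coact_sum_def by (simp add: case_prod_beta')
  have "mu z = J (sA (mu z) 1)" by (simp add: J_simps J_one)
  also have "\<dots> = coact_sum (*) (\<lambda>a w. mu w * J a) z"
    unfolding mu_haar[symmetric] by (simp add: klinear_coact_sum[OF klinear_J] J_simps)
  also have "\<dots> = mu (coinv_avg z)"
    unfolding coinv_avg_def
      by (simp add: klinear_coact_sum[OF mu_lin] klinearD[OF mu_lin] mult.commute)
  also have "\<dots> = f (coinv_avg z)"
    by (subst coinv_avg_eq_scalar[OF f]) (simp add: klinearD[OF mu_lin] mu_one)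
  finally show ?thesis .
qed

lemma haar_measure_coinv_avg:
  assumes f: "klinear sZ (*) f" "f 1 = 1"
  shows "haar_measure sA sZ alpha (\<lambda>z. f (coinv_avg z))"
proof -
  note f_simps = klinearD[OF f(1)]
  have "coact_sum sA (\<lambda>a w. sA (f (coinv_avg w)) a) z = sA (f (coinv_avg z)) 1" for z
  proof -
    have "coact_sum sA (\<lambda>a w. sA (f (coinv_avg w)) a) z
        = coact_sum sA (\<lambda>a w. coact_sum sA (\<lambda>b u. sA (J b * f u) a) w) z"
      unfolding coinv_avg_def
      by (simp add: klinear_coact_sum[OF f(1)] f_simps klinear_coact_sum[OF klinear_scale_left]
          scale_A_simps)
    also have "\<dots> = coact_sum sA (\<lambda>x u. comult_sum sA (\<lambda>a b. sA (J b * f u) a) x) z"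
      by (rule coact_sum_coassoc[OF vector_space_A, symmetric])
        (simp add: ktrilinear_def klinear_def f_simps J_simps scale_A_simps mult.commute
          mult.left_commute distrib_left distrib_right)
    also have "\<dots> = coact_sum sA (\<lambda>x u. sA (J x * f u) 1) z"
    proof -
      have "comult_sum sA (\<lambda>a b. sA (f u) (sA (J b) a)) x = sA (f u) (sA (J x) 1)" for x u
        using comult_sum_haar[OF klinear_scale_right, of "f u" x]
          by (simp add: scale_A_simps mult.commute)
      then show ?thesis by (simp add: scale_A_simps mult.commute)
    qed
    also have "\<dots> = sA (f (coinv_avg z)) 1"
      unfolding coinv_avg_def
      by (simp add: klinear_coact_sum[OF f(1)] f_simps klinear_coact_sum[OF klinear_scale_left])
    finally show ?thesis .
  qed
  moreover have "f (coinv_avg 1) = 1"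
  proof -
    have "coinv_avg 1 = sZ (J 1) 1"
      unfolding coinv_avg_def
      by (rule coact_sum_one[OF vector_space_Z])
        (simp add: kbilinear_def klinear_def J_simps scale_Z_simps mult.commute)
    then show ?thesis using f by (simp add: J_one scale_Z_simps)
  qed
  ultimately show ?thesis
    unfolding haar_measure_def coact_sum_def
    using klinear_imp_linear[OF vector_space_Z vector_space_mult] klinear_coinv_avg f(1)
    by (simp add: case_prod_beta' klinear_def)
qed

end

lemma hopf_algebra_imp_hopf:
  assumes "hopf_algebra sA Delta eps"
  obtains S where "hopf sA Delta eps S"
proof -
  from assms obtain S where "Vector_Spaces.linear sA sA S"
    "\<forall>a. fsumv sA (\<lambda>(x, y). S x * y) (Delta a) = sA (eps a) 1"
    "\<forall>a. fsumv sA (\<lambda>(x, y). x * S y) (Delta a) = sA (eps a) 1"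
    unfolding hopf_algebra_def by blast
  with assms have "hopf sA Delta eps S"
    unfolding hopf_algebra_def k_algebra_def tlinear_def hopf_def
    by (simp add: linear_imp_klinear) metis
  then show thesis by (rule that)
qed

lemma (in hopf) hopf_haar_if_haar_measure:
  "haar_measure sA sA Delta J \<Longrightarrow> hopf_haar sA Delta eps S J"
  unfolding hopf_haar_def hopf_haar_axioms_def haar_measure_def
  by (simp add: hopf_axioms linear_imp_klinear)

lemma (in hopf_haar) haar_galois_if_galois_extension:
  "galois_extension sA Delta eps sZ alpha \<Longrightarrow> haar_galois sA Delta eps S J sZ alpha"
  unfolding haar_galois_def haar_galois_axioms_def galois_extension_def comodule_algebra_def
    k_algebra_def tlinear_def
  by (simp add: hopf_haar_axioms)

theorem proposition4p2p2:
  fixes sA :: "'k::field \<Rightarrow> 'a::ring_1 \<Rightarrow> 'a"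
    and Delta :: "'a \<Rightarrow> ('a \<times> 'a \<Rightarrow> 'k)"
    and eps :: "'a \<Rightarrow> 'k"
    and sZ :: "'k \<Rightarrow> 'z::ring_1 \<Rightarrow> 'z"
    and alpha :: "'z \<Rightarrow> ('a \<times> 'z \<Rightarrow> 'k)"
  assumes "hopf_algebra sA Delta eps"
    and "\<exists>J. haar_measure sA sA Delta J"
    and "galois_extension sA Delta eps sZ alpha"
  shows "\<exists>!mu. haar_measure sA sZ alpha mu"
proof -
  obtain S where "hopf sA Delta eps S" using hopf_algebra_imp_hopf[OF assms(1)] .
  moreover obtain J where "haar_measure sA sA Delta J" using assms(2) ..
  ultimately interpret haar_galois sA Delta eps S J sZ alpha
    using assms(3) by (intro hopf_haar.haar_galois_if_galois_extension
        hopf.hopf_haar_if_haar_measure)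
  obtain f where f: "klinear sZ (*) f" "f 1 = 1"
    using exists_functional_eq_1[OF vector_space_Z, of 1] by auto
  show ?thesis
  proof (rule ex1I)
    show "haar_measure sA sZ alpha (\<lambda>z. f (coinv_avg z))"
      by (rule haar_measure_coinv_avg[OF f])
  next
    fix mu assume "haar_measure sA sZ alpha mu"
    then show "mu = (\<lambda>z. f (coinv_avg z))"
      using haar_measure_eq_coinv_avg[OF f] by auto
  qed
qed

end
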